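(* Let $k\ge1$ be an integer and let $F_1,\ldots,F_N$ be distribution functions on $\mathbb{R}$ with $\int x^{2k}dF_j(x)<\infty$ for $j=1,\ldots,N$. For ${\bf s}=\{i_1,\ldots,i_m\}\subset\{1,\ldots,N\}$ let $F_{\bf s}=F_{i_1}\ast\cdots\ast F_{i_m}$ and let $F=F_1\ast\cdots\ast F_N$. Let $\hat t^{(k)}_{{\bf s},n}$ be the polynomial Pitman estimator of degree $k$ of $\theta$ from a sample of size $n$ from $F_{\bf s}(x-\theta)$, and $\hat t^{(k)}_n$ the polynomial Pitman estimator of degree $k$ from a sample of size $n$ from $F(x-\theta)$. Then for any $n\ge1$ and $1\le m\le N$, $$\mathrm{var}(\hat t^{(k)}_n)\ \ge\ \frac{1}{\binom{N-1}{m-1}}\sum_{\bf s}\mathrm{var}(\hat t^{(k)}_{{\bf s},n}),$$ the sum being over all subsets ${\bf s}$ of $\{1,\ldots,N\}$ with exactly $m$ elements.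
   Context: A sample of size $n$ from $G(x-\theta)$ ($\theta\in\mathbb{R}$ unknown) is $x_1,\ldots,x_n$ i.i.d. with $x_i-\theta\sim G$; assume $\int x^{2k}dG<\infty$. Let $M_k$ be the (finite-dimensional) space of polynomials of degree at most $k$ in the residuals $x_1-\bar x,\ldots,x_n-\bar x$, and let $\hat E(\cdot\mid M_k)$ denote orthogonal projection onto $M_k$ in the Hilbert space of polynomials of degree at most $k$ in $x_1,\ldots,x_n$ with inner product $(q_1,q_2)=E_0(q_1q_2)$, $E_0$ being expectation under $\theta=0$. The polynomial Pitman estimator of degree $k$ is $\hat t^{(k)}_n=\bar x-\hat E(\bar x\mid M_k)$; it is the minimum variance equivariant polynomial estimator of degree $k$ (equivariant: $t(x_1+c,\ldots,x_n+c)=t(x_1,\ldots,x_n)+c$). Convolution: $(F_1\ast F_2)(x)=\int F_1(x-y)\,dF_2(y)$. *)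

theory Defs
  imports "HOL-Probability.Probability"
begin

definition conv_set :: "(nat \<Rightarrow> real measure) \<Rightarrow> nat set \<Rightarrow> real measure" where
  "conv_set F s = fold (\<lambda>i M. F i \<star> M) (sorted_list_of_set s) (return borel 0)"

definition exps :: "nat \<Rightarrow> nat \<Rightarrow> (nat \<Rightarrow> nat) set" where
  "exps n k = {\<alpha>. (\<forall>i\<ge>n. \<alpha> i = 0) \<and> sum \<alpha> {..<n} \<le> k}"

definition poly_funs :: "nat \<Rightarrow> nat \<Rightarrow> ((nat \<Rightarrow> real) \<Rightarrow> real) set" where
  "poly_funs n k = {f. \<exists>c :: (nat \<Rightarrow> nat) \<Rightarrow> real.
      f = (\<lambda>x. \<Sum>\<alpha>\<in>exps n k. c \<alpha> * (\<Prod>i<n. x i ^ \<alpha> i))}"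

definition sample_mean :: "nat \<Rightarrow> (nat \<Rightarrow> real) \<Rightarrow> real" where
  "sample_mean n x = (\<Sum>i<n. x i) / real n"

definition resid_polys :: "nat \<Rightarrow> nat \<Rightarrow> ((nat \<Rightarrow> real) \<Rightarrow> real) set" where
  "resid_polys n k = {(\<lambda>x. p (\<lambda>i. x i - sample_mean n x)) | p. p \<in> poly_funs n k}"

text \<open>Law of a sample of size n under theta = 0 from G.\<close>
definition sample_law :: "nat \<Rightarrow> real measure \<Rightarrow> (nat \<Rightarrow> real) measure" where
  "sample_law n G = PiM {..<n} (\<lambda>_. G)"

text \<open>Orthogonal projection of xbar onto M_k w.r.t. (q1,q2) = E_0(q1 q2).\<close>
definition proj_mean :: "nat \<Rightarrow> nat \<Rightarrow> real measure \<Rightarrow> ((nat \<Rightarrow> real) \<Rightarrow> real)" where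
  "proj_mean k n G = (SOME q. q \<in> resid_polys n k \<and>
      (\<forall>p \<in> resid_polys n k.
         integral\<^sup>L (sample_law n G) (\<lambda>x. (sample_mean n x - q x) * p x) = 0))"

definition pitman_est :: "nat \<Rightarrow> nat \<Rightarrow> real measure \<Rightarrow> (nat \<Rightarrow> real) \<Rightarrow> real" where
  "pitman_est k n G = (\<lambda>x. sample_mean n x - proj_mean k n G x)"

text \<open>Its variance (computed under theta = 0; equivariance makes it independent of theta).\<close>
definition pitman_var :: "nat \<Rightarrow> nat \<Rightarrow> real measure \<Rightarrow> real" where
  "pitman_var k n G = prob_space.variance (sample_law n G) (pitman_est k n G)"

end

theory Submission
  imports Defs
begin

text \<open>
  Realise all samples on one product space: \<omega>(j, i) is an independent draw from F_j, and the
  i-th observation from F_s is the column sum over j \<in> s. Let T be the Pitman estimator of F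
  applied to the full columns; it is centred, and Var T is the left-hand side. Let P_B average
  out the draws with index in B. The P_B are commuting self-adjoint projections with
  P_(B \<union> B') = P_B P_B', and P_J T = E T = 0; an induction on J then gives
  \<Sum>_{|s| = m} \<parallel>P_(J - s) T\<parallel>^2 \<le> C(N - 1, m - 1) \<parallel>T\<parallel>^2 (an Efron-Stein type bound).
  On the other hand P_(J - s) T is again of the form xbar - p(residuals) in the sample from F_s,
  because the mean and the residuals of the full columns are those of the s-columns plus independent
  shifts, and averaging a polynomial over a shift gives a polynomial of the same degree. By the
  minimality of the Pitman estimator, Var t_s \<le> \<parallel>P_(J - s) T\<parallel>^2.
\<close>

section \<open>Semi-inner products on spaces of functions\<close>

locale semi_inner_space =
  fixes V :: "('a \<Rightarrow> real) set" and ip :: "('a \<Rightarrow> real) \<Rightarrow> ('a \<Rightarrow> real) \<Rightarrow> real"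
  assumes V_diff: "f \<in> V \<Longrightarrow> g \<in> V \<Longrightarrow> (\<lambda>x. f x - g x) \<in> V"
  and V_add: "f \<in> V \<Longrightarrow> g \<in> V \<Longrightarrow> (\<lambda>x. f x + g x) \<in> V"
  and V_scale: "f \<in> V \<Longrightarrow> (\<lambda>x. c * f x) \<in> V"
  and V_zero: "(\<lambda>x. 0) \<in> V"
  and ip_sym: "f \<in> V \<Longrightarrow> g \<in> V \<Longrightarrow> ip f g = ip g f"
  and ip_add_left: "f \<in> V \<Longrightarrow> g \<in> V \<Longrightarrow> h \<in> V \<Longrightarrow> ip (\<lambda>x. f x + g x) h = ip f h + ip g h"
  and ip_diff_left: "f \<in> V \<Longrightarrow> g \<in> V \<Longrightarrow> h \<in> V \<Longrightarrow> ip (\<lambda>x. f x - g x) h = ip f h - ip g h"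
  and ip_scale_left: "f \<in> V \<Longrightarrow> h \<in> V \<Longrightarrow> ip (\<lambda>x. c * f x) h = c * ip f h"
  and ip_self_nonneg: "f \<in> V \<Longrightarrow> ip f f \<ge> 0"
begin

lemma ip_zero_left: "h \<in> V \<Longrightarrow> ip (\<lambda>x. 0) h = 0"
  using ip_scale_left[of "\<lambda>x. 0" h 0] V_zero by simp

lemma ip_add_right: "f \<in> V \<Longrightarrow> g \<in> V \<Longrightarrow> h \<in> V \<Longrightarrow> ip h (\<lambda>x. f x + g x) = ip h f + ip h g"
  using ip_sym[of h "\<lambda>x. f x + g x"] ip_sym[of h f] ip_sym[of h g] V_add[of f g]
      ip_add_left[of f g h] by simp

lemma ip_diff_right: "f \<in> V \<Longrightarrow> g \<in> V \<Longrightarrow> h \<in> V \<Longrightarrow> ip h (\<lambda>x. f x - g x) = ip h f - ip h g"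
  using ip_sym[of h "\<lambda>x. f x - g x"] ip_sym[of h f] ip_sym[of h g] V_diff[of f g]
      ip_diff_left[of f g h] by simp

lemma ip_scale_right: "f \<in> V \<Longrightarrow> h \<in> V \<Longrightarrow> ip h (\<lambda>x. c * f x) = c * ip h f"
  using ip_sym[of h "\<lambda>x. c * f x"] ip_sym[of h f] V_scale[of f c] ip_scale_left[of f h c] by simp

lemma V_lincomb: "finite I \<Longrightarrow> (\<And>i. i \<in> I \<Longrightarrow> \<phi> i \<in> V) \<Longrightarrow> (\<lambda>x. \<Sum>i\<in>I. c i * \<phi> i x) \<in> V"
proof (induction I rule: finite_induct)
  case empty then show ?case using V_zero by simp
next
  case (insert a I)
  then have "(\<lambda>x. c a * \<phi> a x + (\<Sum>i\<in>I. c i * \<phi> i x)) \<in> V"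
    by (intro V_add V_scale) auto
  then show ?case using insert by simp
qed

lemma ip_lincomb_left: "finite I \<Longrightarrow> (\<And>i. i \<in> I \<Longrightarrow> \<phi> i \<in> V) \<Longrightarrow> h \<in> V \<Longrightarrow>
   ip (\<lambda>x. \<Sum>i\<in>I. c i * \<phi> i x) h = (\<Sum>i\<in>I. c i * ip (\<phi> i) h)"
proof (induction I rule: finite_induct)
  case empty then show ?case using ip_zero_left by simp
next
  case (insert a I)
  have "ip (\<lambda>x. c a * \<phi> a x + (\<Sum>i\<in>I. c i * \<phi> i x)) h = ip (\<lambda>x. c a * \<phi> a x) h
      + ip (\<lambda>x. \<Sum>i\<in>I. c i * \<phi> i x) h"
    using insert by (intro ip_add_left V_scale V_lincomb) auto
  then show ?case using insert by (simp add: ip_scale_left)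
qed

lemma ip_lincomb_right: "finite I \<Longrightarrow> (\<And>i. i \<in> I \<Longrightarrow> \<phi> i \<in> V) \<Longrightarrow> h \<in> V \<Longrightarrow>
   ip h (\<lambda>x. \<Sum>i\<in>I. c i * \<phi> i x) = (\<Sum>i\<in>I. c i * ip h (\<phi> i))"
  using ip_sym[of h "\<lambda>x. \<Sum>i\<in>I. c i * \<phi> i x"] V_lincomb[of I \<phi> c] ip_lincomb_left[of I \<phi> h c]
      ip_sym[of h]
  by (simp cong: sum.cong)

lemma ip_eq_0_if_ip_self_eq_0:
  assumes "f \<in> V" "g \<in> V" "ip g g = 0" shows "ip f g = 0"
proof -
  have "0 \<le> ip (\<lambda>x. f x + t * g x) (\<lambda>x. f x + t * g x)" for t
    using assms by (intro ip_self_nonneg V_add V_scale)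
  also have "ip (\<lambda>x. f x + t * g x) (\<lambda>x. f x + t * g x) = ip f f + 2 * t * ip f g" for t
  proof -
    have gV: "(\<lambda>x. t * g x) \<in> V" using assms by (intro V_scale)
    have "ip (\<lambda>x. f x + t * g x) (\<lambda>x. f x + t * g x) = ip f (\<lambda>x. f x + t * g x)
        + ip (\<lambda>x. t * g x) (\<lambda>x. f x + t * g x)"
      using assms gV by (intro ip_add_left V_add)
    also have "\<dots> = ip f f + ip f (\<lambda>x. t * g x) + (ip (\<lambda>x. t * g x) f
        + ip (\<lambda>x. t * g x) (\<lambda>x. t * g x))"
      using assms gV by (simp add: ip_add_right)
    also have "\<dots> = ip f f + 2 * t * ip f g + t * t * ip g g"
      using assms gV by (simp add: ip_scale_left ip_scale_right ip_sym[of g f])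
    finally show ?thesis using assms by simp
  qed
  finally have *: "0 \<le> ip f f + 2 * t * ip f g" for t .
  show ?thesis
  proof (rule ccontr)
    assume ne: "ip f g \<noteq> 0"
    have "0 \<le> ip f f + 2 * (- (ip f f + 1) / (2 * ip f g)) * ip f g" by (rule *)
    also have "\<dots> = -1" using ne by (simp add: field_simps)
    finally show False by simp
  qed
qed

lemma ip_lincomb_right_eq_0:
  "finite I \<Longrightarrow> (\<And>i. i \<in> I \<Longrightarrow> \<phi> i \<in> V) \<Longrightarrow> h \<in> V \<Longrightarrow> (\<And>i. i \<in> I \<Longrightarrow> ip h (\<phi> i) = 0) \<Longrightarrow>
   ip h (\<lambda>x. \<Sum>i\<in>I. c i * \<phi> i x) = 0"
  by (simp add: ip_lincomb_right)

lemma orthogonal_residual_exists: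
  assumes "finite I" "\<And>i. i \<in> I \<Longrightarrow> \<phi> i \<in> V"
  shows "g \<in> V \<Longrightarrow> \<exists>c. \<forall>j\<in>I. ip (\<lambda>x. g x - (\<Sum>i\<in>I. c i * \<phi> i x)) (\<phi> j) = 0"
  using assms
proof (induction I arbitrary: g rule: finite_induct)
  case empty then show ?case by simp
next
  case (insert d I)
  have \<phi>: "\<And>i. i \<in> I \<Longrightarrow> \<phi> i \<in> V" and \<phi>d: "\<phi> d \<in> V" using insert by auto
  obtain c where c: "\<forall>j\<in>I. ip (\<lambda>x. g x - (\<Sum>i\<in>I. c i * \<phi> i x)) (\<phi> j) = 0"
    using insert.IH[OF insert.prems(1) \<phi>] by blast
  obtain a where a: "\<forall>j\<in>I. ip (\<lambda>x. \<phi> d x - (\<Sum>i\<in>I. a i * \<phi> i x)) (\<phi> j) = 0"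
    using insert.IH[OF \<phi>d \<phi>] by blast
  define r where "r = (\<lambda>x. g x - (\<Sum>i\<in>I. c i * \<phi> i x))"
  define rd where "rd = (\<lambda>x. \<phi> d x - (\<Sum>i\<in>I. a i * \<phi> i x))"
  have span: "(\<lambda>x. \<Sum>i\<in>I. a i * \<phi> i x) \<in> V" using \<phi> insert by (intro V_lincomb) auto
  have r: "r \<in> V" and rd: "rd \<in> V"
    unfolding r_def rd_def using insert \<phi> \<phi>d by (auto intro!: V_diff V_lincomb)
  \<comment> \<open>Subtract from r its component along rd; if rd is null, r is already orthogonal to it.\<close>
  define t where "t = (if ip rd rd = 0 then 0 else ip r rd / ip rd rd)"
  define r' where "r' = (\<lambda>x. r x - t * rd x)"
  have r': "r' \<in> V" unfolding r'_def using r rd by (intro V_diff V_scale)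
  have r'_I: "ip r' (\<phi> j) = 0" if "j \<in> I" for j
    using that c a \<phi> r rd V_scale[OF rd]
    unfolding r'_def r_def[symmetric] rd_def[symmetric] by (simp add: ip_diff_left ip_scale_left)
  have "ip r' rd = ip r rd - t * ip rd rd"
    unfolding r'_def using r rd V_scale[OF rd] by (simp add: ip_diff_left ip_scale_left)
  also have "\<dots> = 0"
    using ip_eq_0_if_ip_self_eq_0[OF r rd] unfolding t_def by auto
  finally have "ip r' rd = 0" .
  moreover have "ip r' (\<lambda>x. \<Sum>i\<in>I. a i * \<phi> i x) = 0"
    using r'_I \<phi> insert r' by (intro ip_lincomb_right_eq_0) auto
  moreover have "\<phi> d = (\<lambda>x. rd x + (\<Sum>i\<in>I. a i * \<phi> i x))" unfolding rd_def by simp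
  ultimately have r'_d: "ip r' (\<phi> d) = 0" using r' rd span by (simp add: ip_add_right)
  define c' where "c' = (\<lambda>i. if i = d then t else c i - t * a i)"
  have "(\<lambda>x. g x - (\<Sum>i\<in>insert d I. c' i * \<phi> i x)) = r'"
  proof
    fix x
    have "(\<Sum>i\<in>insert d I. c' i * \<phi> i x) = t * \<phi> d x + (\<Sum>i\<in>I. (c i - t * a i) * \<phi> i x)"
      using insert unfolding c'_def by (auto intro!: sum.cong)
    also have "\<dots> = t * \<phi> d x + (\<Sum>i\<in>I. c i * \<phi> i x) - t * (\<Sum>i\<in>I. a i * \<phi> i x)"
      by (simp add: algebra_simps sum_subtractf sum_distrib_left)
    finally show "g x - (\<Sum>i\<in>insert d I. c' i * \<phi> i x) = r' x"
      unfolding r'_def r_def rd_def by (simp add: algebra_simps)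
  qed
  then show ?case using r'_I r'_d by (intro exI[of _ c']) auto
qed

lemma orthogonal_residual_le:
  assumes "g \<in> V" "q \<in> V" "p \<in> V" "ip (\<lambda>x. g x - q x) (\<lambda>x. q x - p x) = 0"
  shows "ip (\<lambda>x. g x - q x) (\<lambda>x. g x - q x) \<le> ip (\<lambda>x. g x - p x) (\<lambda>x. g x - p x)"
proof -
  let ?a = "\<lambda>x. g x - q x" and ?b = "\<lambda>x. q x - p x"
  have aV: "?a \<in> V" and bV: "?b \<in> V" using assms by (auto intro: V_diff)
  have eq: "(\<lambda>x. g x - p x) = (\<lambda>x. ?a x + ?b x)" by auto
  have "ip (\<lambda>x. g x - p x) (\<lambda>x. g x - p x) = ip ?a ?a + 2 * ip ?a ?b + ip ?b ?b"
  proof -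
    have "ip (\<lambda>x. ?a x + ?b x) (\<lambda>x. ?a x + ?b x) = ip ?a (\<lambda>x. ?a x + ?b x)
        + ip ?b (\<lambda>x. ?a x + ?b x)"
      using aV bV by (intro ip_add_left V_add)
    also have "\<dots> = ip ?a ?a + ip ?a ?b + (ip ?b ?a + ip ?b ?b)"
      by (simp only: ip_add_right[OF aV bV aV] ip_add_right[OF aV bV bV])
    finally have "ip (\<lambda>x. ?a x + ?b x) (\<lambda>x. ?a x + ?b x) = ip ?a ?a + 2 * ip ?a ?b + ip ?b ?b"
      using ip_sym[OF bV aV] by simp
    then show ?thesis by (simp only: eq)
  qed
  then show ?thesis using assms(4) ip_self_nonneg[OF bV] by simp
qed

end

section \<open>Complement sums for commuting projections\<close>

definition choose_increment :: "nat \<Rightarrow> nat \<Rightarrow> real" where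
  "choose_increment N m = real (N choose m) - real ((N - 1) choose m)"

lemma choose_increment_eq: "N \<ge> 1 \<Longrightarrow> m \<ge> 1 \<Longrightarrow> choose_increment N m = real ((N - 1) choose (m - 1))"
  unfolding choose_increment_def using choose_reduce_nat[of N m] by simp

lemma choose_increment_step:
  fixes a b c e :: real
  assumes m: "m \<ge> 1" and key: "a - b - c + e \<ge> 0" and N0: "N = 0 \<Longrightarrow> c = a"
  shows "choose_increment N m * (b - e) + real (N choose m) * e + choose_increment N (m - 1)
      * (a - c) + real (N choose (m - 1)) * c
         \<le> choose_increment (Suc N) m * (a - e) + real (Suc N choose m) * e"
proof (cases "N = 0")
  case True
  then have "c = a" using N0 by simp
  show ?thesis
  proof (cases "m = 1")
    case True then show ?thesis using \<open>c = a\<close> \<open>N = 0\<close> by (simp add: choose_increment_def)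
  next
    case False
    then have "m \<ge> 2" using m by simp
    then have z: "0 choose m = 0" "0 choose (m - Suc 0) = 0" "Suc 0 choose m = 0" by simp_all
    show ?thesis unfolding choose_increment_def \<open>N = 0\<close> by (simp add: z)
  qed
next
  case False
  then have N1: "N \<ge> 1" by simp
  have p: "choose_increment N m = real ((N - 1) choose (m - 1))"
    using choose_increment_eq[OF N1 m] .
  have q: "choose_increment (Suc N) m = real (N choose (m - 1))"
    using choose_increment_eq[of "Suc N" m] m by simp
  have r: "choose_increment N (m - 1) = real (N choose (m - 1)) - real ((N - 1) choose (m - 1))"
    unfolding choose_increment_def ..
  have s: "real (Suc N choose m) = real (N choose m) + real (N choose (m - 1))"
    using m by (cases m) auto
  have "choose_increment (Suc N) m * (a - e) + real (Suc N choose m) * e -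
      (choose_increment N m * (b - e) + real (N choose m) * e + choose_increment N (m - 1)
          * (a - c) + real (N choose (m - 1)) * c)
      = real ((N - 1) choose (m - 1)) * (a - b - c + e)"
    unfolding p q r s by (simp add: algebra_simps)
  also have "\<dots> \<ge> 0" using key by simp
  finally show ?thesis by simp
qed

lemma subsets_card_insert:
  assumes J: "finite J" and j: "j \<notin> J" and m: "m \<ge> 1"
  shows "{s. s \<subseteq> insert j J \<and> card s = m} =
    {s. s \<subseteq> J \<and> card s = m} \<union> insert j ` {t. t \<subseteq> J \<and> card t = m - 1}"
proof (intro equalityI subsetI)
  fix s assume "s \<in> {s. s \<subseteq> insert j J \<and> card s = m}"
  then have s: "s \<subseteq> insert j J" "card s = m" by auto
  show "s \<in> {s. s \<subseteq> J \<and> card s = m} \<union> insert j ` {t. t \<subseteq> J \<and> card t = m - 1}"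
  proof (cases "j \<in> s")
    case True
    then have "s = insert j (s - {j})" "s - {j} \<subseteq> J" "card (s - {j}) = m - 1"
      using s by auto
    then show ?thesis by blast
  qed (use s in auto)
next
  fix s assume "s \<in> {s. s \<subseteq> J \<and> card s = m} \<union> insert j ` {t. t \<subseteq> J \<and> card t = m - 1}"
  then show "s \<in> {s. s \<subseteq> insert j J \<and> card s = m}"
  proof
    assume "s \<in> insert j ` {t. t \<subseteq> J \<and> card t = m - 1}"
    then obtain t where t: "s = insert j t" "t \<subseteq> J" "card t = m - 1" by auto
    have "j \<notin> t" "finite t" using t j J by (auto dest: finite_subset)
    then show ?thesis using t m by auto
  qed auto
qed

locale projection_family = semi_inner_space V ip for V :: "('a \<Rightarrow> real) set" and ip +
  fixes P :: "nat set \<Rightarrow> ('a \<Rightarrow> real) \<Rightarrow> ('a \<Rightarrow> real)" and J0 :: "nat set"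
  assumes P_closed: "B \<subseteq> J0 \<Longrightarrow> f \<in> V \<Longrightarrow> P B f \<in> V"
  and P_empty: "f \<in> V \<Longrightarrow> ip (P {} f) f = ip f f"
  and P_idem: "B \<subseteq> J0 \<Longrightarrow> f \<in> V \<Longrightarrow> P B (P B f) = P B f"
  and P_sa: "B \<subseteq> J0 \<Longrightarrow> f \<in> V \<Longrightarrow> g \<in> V \<Longrightarrow> ip (P B f) g = ip f (P B g)"
  and P_union: "B \<subseteq> J0 \<Longrightarrow> B' \<subseteq> J0 \<Longrightarrow> B \<inter> B' = {} \<Longrightarrow> f \<in> V \<Longrightarrow> P (B \<union> B') f = P B (P B' f)"
  and P_diff: "B \<subseteq> J0 \<Longrightarrow> f \<in> V \<Longrightarrow> g \<in> V \<Longrightarrow> P B (\<lambda>x. f x - g x) = (\<lambda>x. P B f x - P B g x)"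
begin

definition proj_sum :: "nat set \<Rightarrow> ('a \<Rightarrow> real) \<Rightarrow> nat \<Rightarrow> real" where
  "proj_sum J f m = (\<Sum>s \<in> {s. s \<subseteq> J \<and> card s = m}. ip (P (J - s) f) f)"

lemma proj_sum_0: "finite J \<Longrightarrow> proj_sum J f 0 = ip (P J f) f"
proof -
  assume "finite J"
  then have "{s. s \<subseteq> J \<and> card s = 0} = {{}}" by (auto dest: finite_subset)
  then show ?thesis unfolding proj_sum_def by simp
qed

lemma proj_sum_empty_Suc: "proj_sum {} f (Suc m) = 0"
proof -
  have subsets: "{s. s \<subseteq> {} \<and> card s = Suc m} = {}" by auto
  show ?thesis unfolding proj_sum_def subsets by simp
qed

lemma P_comm: "B \<subseteq> J0 \<Longrightarrow> B' \<subseteq> J0 \<Longrightarrow> B \<inter> B' = {} \<Longrightarrow> f \<in> V \<Longrightarrow> P B (P B' f) = P B' (P B f)"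
  using P_union[of B B' f] P_union[of B' B f] by (simp add: Un_commute Int_commute)

lemma ip_P_self: "B \<subseteq> J0 \<Longrightarrow> f \<in> V \<Longrightarrow> ip (P B f) (P B f) = ip (P B f) f"
  using P_sa[of B "P B f" f] P_idem[of B f] P_closed[of B f] by simp

lemma ip_P_sym: "B \<subseteq> J0 \<Longrightarrow> f \<in> V \<Longrightarrow> g \<in> V \<Longrightarrow> ip (P B f) g = ip (P B g) f"
  using P_sa[of B f g] ip_sym[of f "P B g"] P_closed[of B g] by simp

lemma ip_diff_P_self:
  assumes "B \<subseteq> J0" "f \<in> V"
  shows "ip (\<lambda>x. f x - P B f x) (\<lambda>x. f x - P B f x) = ip f f - ip (P B f) f"
  using assms P_closed[OF assms] V_diff[OF assms(2) P_closed[OF assms]] ip_P_self[OF assms]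
    ip_sym[OF assms(2) P_closed[OF assms]]
  by (simp add: ip_diff_left ip_diff_right)

lemma P_contract: "B \<subseteq> J0 \<Longrightarrow> f \<in> V \<Longrightarrow> ip (P B f) f \<le> ip f f"
  using ip_diff_P_self[of B f] ip_self_nonneg[OF V_diff[of f "P B f"]] P_closed[of B f] by simp

text \<open>With u = f - P J f the two sides are ip (P {j} u) u and ip u u.\<close>
lemma proj_defect_mono:
  assumes J: "J \<subseteq> J0" and j: "j \<in> J0" "j \<notin> J" and f: "f \<in> V"
  shows "ip (P {j} f) (P {j} f) - ip (P (insert j J) f) f \<le> ip f f - ip (P J f) f"
proof -
  let ?Q = "P {j}"
  have j0: "{j} \<subseteq> J0" using j by simp
  define u where "u = (\<lambda>x. f x - P J f x)"
  have PJ: "P J f \<in> V" using P_closed[OF J f] .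
  have u: "u \<in> V" unfolding u_def using f PJ by (rule V_diff)
  have Qf: "?Q f \<in> V" and QPJ: "?Q (P J f) \<in> V" using P_closed[OF j0] f PJ by auto
  have ins: "P (insert j J) f = ?Q (P J f)"
    using P_union[OF j0 J _ f] j by simp
  have Qu: "?Q u = (\<lambda>x. ?Q f x - ?Q (P J f) x)" unfolding u_def using j0 f PJ by (rule P_diff)
  have "ip (?Q u) u = ip (\<lambda>x. ?Q f x - ?Q (P J f) x) (\<lambda>x. f x - P J f x)"
    using Qu unfolding u_def by simp
  also have "\<dots> = ip (?Q f) f - ip (?Q f) (P J f) - (ip (?Q (P J f)) f - ip (?Q (P J f)) (P J f))"
    using f PJ Qf QPJ V_diff[OF f PJ] by (simp add: ip_diff_left ip_diff_right)
  also have "ip (?Q f) f = ip (?Q f) (?Q f)" using ip_P_self[OF j0 f] by simp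
  also have "ip (?Q f) (P J f) = ip (?Q (P J f)) f" using ip_P_sym[OF j0 f PJ] .
  also have "ip (?Q (P J f)) (P J f) = ip (?Q (P J f)) f"
  proof -
    have "P J (?Q (P J f)) = ?Q (P J f)"
      using P_comm[OF J j0 _ PJ] P_idem[OF J f] j by simp
    then show ?thesis using ip_P_sym[OF J f QPJ] ip_sym[OF QPJ PJ] by simp
  qed
  finally have "ip (?Q u) u = ip (?Q f) (?Q f) - ip (P (insert j J) f) f" using ins by simp
  moreover have "ip (?Q u) u \<le> ip u u" using P_contract[OF j0 u] .
  moreover have "ip u u = ip f f - ip (P J f) f" unfolding u_def by (rule ip_diff_P_self[OF J f])
  ultimately show ?thesis by simp
qed

lemma proj_sum_insert:
  assumes J: "finite J" "J \<subseteq> J0" and j: "j \<in> J0" "j \<notin> J" and m: "m \<ge> 1" and f: "f \<in> V"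
  shows "proj_sum (insert j J) f m = proj_sum J (P {j} f) m + proj_sum J f (m - 1)"
proof -
  have j0: "{j} \<subseteq> J0" using j by simp
  have move_P: "ip (P (insert j J - s) f) f = ip (P (J - s) (P {j} f)) (P {j} f)"
    if s: "s \<subseteq> J" for s
  proof -
    have Js: "J - s \<subseteq> J0" using J by auto
    have PJs: "P (J - s) f \<in> V" using P_closed[OF Js f] .
    have "insert j J - s = {j} \<union> (J - s)" using s j by auto
    then have "ip (P (insert j J - s) f) f = ip (P {j} (P (J - s) f)) f"
      using P_union[OF j0 Js _ f] j by simp
    also have "\<dots> = ip (P {j} (P {j} (P (J - s) f))) f" using P_idem[OF j0 PJs] by simp
    also have "\<dots> = ip (P {j} (P (J - s) f)) (P {j} f)"
      using P_sa[OF j0 P_closed[OF j0 PJs] f] .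
    also have "\<dots> = ip (P (J - s) (P {j} f)) (P {j} f)" using P_comm[OF j0 Js _ f] j by simp
    finally show ?thesis .
  qed
  have drop_j: "insert j J - insert j t = J - t" if "t \<subseteq> J" for t using that j by auto
  have inj: "inj_on (insert j) {t. t \<subseteq> J \<and> card t = m - 1}"
    using j by (auto simp: inj_on_def)
  have "proj_sum (insert j J) f m = (\<Sum>s\<in>{s. s \<subseteq> J \<and> card s = m}. ip (P (insert j J - s) f) f)
      + (\<Sum>s\<in>insert j ` {t. t \<subseteq> J \<and> card t = m - 1}. ip (P (insert j J - s) f) f)"
    unfolding proj_sum_def subsets_card_insert[OF J(1) j(2) m] using J j
    by (intro sum.union_disjoint) auto
  also have "(\<Sum>s\<in>{s. s \<subseteq> J \<and> card s = m}. ip (P (insert j J - s) f) f) = proj_sum J (P {j} f) m"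
    unfolding proj_sum_def using move_P by (intro sum.cong) auto
  also have "(\<Sum>s\<in>insert j ` {t. t \<subseteq> J \<and> card t = m - 1}. ip (P (insert j J - s) f) f)
      = proj_sum J f (m - 1)"
    unfolding proj_sum_def using drop_j by (subst sum.reindex[OF inj]) (auto intro!: sum.cong)
  finally show ?thesis .
qed

lemma proj_sum_le:
  assumes "finite J" "J \<subseteq> J0"
  shows "f \<in> V \<Longrightarrow> proj_sum J f m \<le>
    choose_increment (card J) m * (ip f f - ip (P J f) f) + real (card J choose m) * ip (P J f) f"
  using assms
proof (induction J arbitrary: f m rule: finite_induct)
  case empty
  then show ?case by (cases m) (simp_all add: proj_sum_0 proj_sum_empty_Suc choose_increment_def)
next
  case (insert j J)
  have J: "J \<subseteq> J0" and j: "j \<in> J0" "{j} \<subseteq> J0" using insert by auto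
  have f: "f \<in> V" by fact
  show ?case
  proof (cases "m = 0")
    case True
    then show ?thesis using insert by (simp add: proj_sum_0 choose_increment_def)
  next
    case False
    define a where "a = ip f f"
    define b where "b = ip (P {j} f) (P {j} f)"
    define c where "c = ip (P J f) f"
    define e where "e = ip (P (insert j J) f) f"
    have Qf: "P {j} f \<in> V" using P_closed[OF j(2) f] .
    have e': "ip (P J (P {j} f)) (P {j} f) = e"
      using P_sa[OF j(2) P_closed[OF J Qf] f] P_comm[OF j(2) J _ Qf] P_comm[OF j(2) J _ f]
        P_idem[OF j(2) f] P_union[OF j(2) J _ f] insert(2)
      unfolding e_def by simp
    have "proj_sum (insert j J) f m = proj_sum J (P {j} f) m + proj_sum J f (m - 1)"
      using insert False by (intro proj_sum_insert) auto
    also have "\<dots> \<le> choose_increment (card J) m * (b - e) + real (card J choose m) * e +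
        choose_increment (card J) (m - 1) * (a - c) + real (card J choose (m - 1)) * c"
      using insert.IH[OF Qf J, of m] insert.IH[OF f J, of "m - 1"] unfolding a_def b_def c_def e'
      by linarith
    also have "\<dots> \<le> choose_increment (Suc (card J)) m * (a - e) + real (Suc (card J) choose m) * e"
    proof (rule choose_increment_step)
      show "a - b - c + e \<ge> 0"
        using proj_defect_mono[OF J j(1) insert(2) f] unfolding a_def b_def c_def e_def by simp
      show "c = a" if "card J = 0"
        using that insert P_empty[OF f] unfolding a_def c_def by simp
    qed (use False in simp)
    finally show ?thesis using insert unfolding a_def e_def by simp
  qed
qed

lemma sum_ip_P_complement_le:
  assumes "finite J" "J \<subseteq> J0" "f \<in> V" "card J \<ge> 1" "m \<ge> 1" "ip (P J f) f = 0"
  shows "(\<Sum>s \<in> {s. s \<subseteq> J \<and> card s = m}. ip (P (J - s) f) (P (J - s) f))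
       \<le> real ((card J - 1) choose (m - 1)) * ip f f"
proof -
  have "(\<Sum>s \<in> {s. s \<subseteq> J \<and> card s = m}. ip (P (J - s) f) (P (J - s) f)) = proj_sum J f m"
    unfolding proj_sum_def using assms by (intro sum.cong refl ip_P_self) auto
  also have "\<dots> \<le> choose_increment (card J) m * (ip f f - ip (P J f) f) + real (card J choose m)
      * ip (P J f) f"
    using proj_sum_le assms by blast
  also have "\<dots> = real ((card J - 1) choose (m - 1)) * ip f f"
    using assms choose_increment_eq by simp
  finally show ?thesis .
qed

end

section \<open>Polynomials in the residuals\<close>

lemma finite_exps: "finite (exps n k)"
proof -
  have "exps n k \<subseteq> (\<lambda>f. \<lambda>i. if i < n then f i else 0) ` (PiE {..<n} (\<lambda>_. {..k}))"
  proof
    fix \<alpha> assume a: "\<alpha> \<in> exps n k"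
    have le: "\<alpha> i \<le> k" if "i < n" for i
    proof -
      have "\<alpha> i \<le> sum \<alpha> {..<n}" using that by (intro member_le_sum) auto
      then show ?thesis using a unfolding exps_def by simp
    qed
    have "\<alpha> = (\<lambda>i. if i < n then restrict \<alpha> {..<n} i else 0)"
      using a unfolding exps_def by (auto simp: fun_eq_iff)
    moreover have "restrict \<alpha> {..<n} \<in> PiE {..<n} (\<lambda>_. {..k})" using le by auto
    ultimately show "\<alpha> \<in> (\<lambda>f. \<lambda>i. if i < n then f i else 0) ` (PiE {..<n} (\<lambda>_. {..k}))" by blast
  qed
  moreover have "finite (PiE {..<n} (\<lambda>_. {..k::nat}))" by (intro finite_PiE) auto
  ultimately show ?thesis by (auto dest: finite_subset)
qed

lemma poly_funs_lincomb:
  assumes T: "finite T" and \<beta>: "\<And>t. t \<in> T \<Longrightarrow> sum (\<beta> t) {..<n} \<le> k"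
  shows "(\<lambda>x. \<Sum>t\<in>T. a t * (\<Prod>i<n. x i ^ \<beta> t i)) \<in> poly_funs n k"
proof -
  \<comment> \<open>exps n k only contains exponent vectors that vanish from n on.\<close>
  define tr where "tr = (\<lambda>\<beta>::nat\<Rightarrow>nat. \<lambda>i. if i < n then \<beta> i else 0)"
  have tr_in: "tr (\<beta> t) \<in> exps n k" if "t \<in> T" for t
  proof -
    have "(\<Sum>i<n. if i < n then \<beta> t i else 0) = sum (\<beta> t) {..<n}" by (intro sum.cong) auto
    then show ?thesis using \<beta>[OF that] unfolding tr_def exps_def by auto
  qed
  have tr_mono: "(\<Prod>i<n. x i ^ tr \<beta>' i) = (\<Prod>i<n. x i ^ \<beta>' i)" for x :: "nat \<Rightarrow> real" and \<beta>'
    by (rule prod.cong) (auto simp: tr_def)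
  define c where "c = (\<lambda>\<alpha>. \<Sum>t\<in>{t\<in>T. tr (\<beta> t) = \<alpha>}. a t)"
  have "(\<lambda>x. \<Sum>t\<in>T. a t * (\<Prod>i<n. x i ^ \<beta> t i)) = (\<lambda>x. \<Sum>\<alpha>\<in>exps n k. c \<alpha> * (\<Prod>i<n. x i ^ \<alpha> i))"
  proof
    fix x
    have "(\<Sum>\<alpha>\<in>exps n k. c \<alpha> * (\<Prod>i<n. x i ^ \<alpha> i)) =
        (\<Sum>\<alpha>\<in>exps n k. \<Sum>t\<in>{t\<in>T. tr (\<beta> t) = \<alpha>}. a t * (\<Prod>i<n. x i ^ \<beta> t i))"
      unfolding c_def sum_distrib_right
    proof (intro sum.cong refl)
      fix \<alpha> t assume "t \<in> {t\<in>T. tr (\<beta> t) = \<alpha>}"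
      then have "\<alpha> = tr (\<beta> t)" by simp
      then show "a t * (\<Prod>i<n. x i ^ \<alpha> i) = a t * (\<Prod>i<n. x i ^ \<beta> t i)" using tr_mono by simp
    qed
    also have "\<dots> = (\<Sum>t\<in>T. a t * (\<Prod>i<n. x i ^ \<beta> t i))"
      using T tr_in finite_exps by (intro sum.group) auto
    finally show "(\<Sum>t\<in>T. a t * (\<Prod>i<n. x i ^ \<beta> t i)) = (\<Sum>\<alpha>\<in>exps n k. c \<alpha> * (\<Prod>i<n. x i ^ \<alpha> i))" ..
  qed
  then show ?thesis unfolding poly_funs_def by blast
qed

lemma poly_funs_add: "p \<in> poly_funs n k \<Longrightarrow> q \<in> poly_funs n k \<Longrightarrow> (\<lambda>x. p x + q x) \<in> poly_funs n k"
proof -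
  assume "p \<in> poly_funs n k" "q \<in> poly_funs n k"
  then obtain c d where "p = (\<lambda>x. \<Sum>\<alpha>\<in>exps n k. c \<alpha> * (\<Prod>i<n. x i ^ \<alpha> i))"
    "q = (\<lambda>x. \<Sum>\<alpha>\<in>exps n k. d \<alpha> * (\<Prod>i<n. x i ^ \<alpha> i))" unfolding poly_funs_def by blast
  then have "(\<lambda>x. p x + q x) = (\<lambda>x. \<Sum>\<alpha>\<in>exps n k. (c \<alpha> + d \<alpha>) * (\<Prod>i<n. x i ^ \<alpha> i))"
    by (simp add: distrib_right sum.distrib)
  then show ?thesis unfolding poly_funs_def by (intro CollectI exI[of _ "\<lambda>\<alpha>. c \<alpha> + d \<alpha>"])
qed

lemma poly_funs_scale: "p \<in> poly_funs n k \<Longrightarrow> (\<lambda>x. a * p x) \<in> poly_funs n k"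
proof -
  assume "p \<in> poly_funs n k"
  then obtain c where "p = (\<lambda>x. \<Sum>\<alpha>\<in>exps n k. c \<alpha> * (\<Prod>i<n. x i ^ \<alpha> i))" unfolding poly_funs_def
    by blast
  then have "(\<lambda>x. a * p x) = (\<lambda>x. \<Sum>\<alpha>\<in>exps n k. (a * c \<alpha>) * (\<Prod>i<n. x i ^ \<alpha> i))"
    by (simp add: sum_distrib_left mult.assoc)
  then show ?thesis unfolding poly_funs_def by (intro CollectI exI[of _ "\<lambda>\<alpha>. a * c \<alpha>"])
qed

lemma poly_funs_diff: "p \<in> poly_funs n k \<Longrightarrow> q \<in> poly_funs n k \<Longrightarrow> (\<lambda>x. p x - q x) \<in> poly_funs n k"
  using poly_funs_add[of p n k "\<lambda>x. (-1) * q x"] poly_funs_scale[of q n k "-1"] by simp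

lemma poly_funs_const: "(\<lambda>x. a) \<in> poly_funs n k"
  using poly_funs_lincomb[of "{()}" "\<lambda>_ _. 0" n k "\<lambda>_. a"] by simp

lemma poly_funs_cong: "p \<in> poly_funs n k \<Longrightarrow> (\<And>i. i < n \<Longrightarrow> x i = y i) \<Longrightarrow> p x = p y"
  unfolding poly_funs_def by auto

lemma prod_add_power_eq_sum_PiE:
  fixes u v :: "nat \<Rightarrow> real"
  shows "(\<Prod>i<n. (u i + v i) ^ \<alpha> i) = (\<Sum>h\<in>PiE {..<n} (\<lambda>i. {..\<alpha> i}).
    (\<Prod>i<n. real (\<alpha> i choose h i)) * (\<Prod>i<n. u i ^ h i) * (\<Prod>i<n. v i ^ (\<alpha> i - h i)))"
proof -
  have "(\<Prod>i<n. (u i + v i) ^ \<alpha> i) =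
      (\<Prod>i<n. \<Sum>b\<le>\<alpha> i. real (\<alpha> i choose b) * u i ^ b * v i ^ (\<alpha> i - b))"
    by (simp add: binomial_ring)
  also have "\<dots> = (\<Sum>h\<in>PiE {..<n} (\<lambda>i. {..\<alpha> i}).
      \<Prod>i<n. real (\<alpha> i choose h i) * u i ^ h i * v i ^ (\<alpha> i - h i))"
    by (rule prod_sum_PiE) auto
  finally show ?thesis by (simp add: prod.distrib)
qed

lemma poly_funs_shift_expansion:
  assumes p: "p \<in> poly_funs n k"
  obtains T :: "((nat \<Rightarrow> nat) \<times> (nat \<Rightarrow> nat)) set" and A
  where "finite T" "\<And>t. t \<in> T \<Longrightarrow> sum (snd t) {..<n} \<le> k"
    "\<And>t. t \<in> T \<Longrightarrow> (\<Sum>i<n. fst t i - snd t i) \<le> k"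
    "\<And>u v. p (\<lambda>i. u i + v i) =
      (\<Sum>t\<in>T. A t * (\<Prod>i<n. u i ^ snd t i) * (\<Prod>i<n. v i ^ (fst t i - snd t i)))"
proof -
  obtain c where c: "p = (\<lambda>x. \<Sum>\<alpha>\<in>exps n k. c \<alpha> * (\<Prod>i<n. x i ^ \<alpha> i))" using p
    unfolding poly_funs_def by blast
  define H where "H = (\<lambda>\<alpha>::nat\<Rightarrow>nat. PiE {..<n} (\<lambda>i. {..\<alpha> i}))"
  define T where "T = Sigma (exps n k) H"
  have finH: "finite (H \<alpha>)" for \<alpha> unfolding H_def by (intro finite_PiE) auto
  have finT: "finite T" unfolding T_def using finite_exps finH by auto
  have hle: "snd t i \<le> fst t i" if t: "t \<in> T" and i: "i < n" for t i
  proof -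
    have "snd t \<in> H (fst t)" using t unfolding T_def by (cases t) auto
    then have "snd t i \<in> {..fst t i}" using i unfolding H_def by (auto simp: PiE_iff)
    then show ?thesis by simp
  qed
  have sumle: "sum (fst t) {..<n} \<le> k" if t: "t \<in> T" for t
  proof -
    have "fst t \<in> exps n k" using t unfolding T_def by (cases t) auto
    then show ?thesis unfolding exps_def by simp
  qed
  have sum_snd: "sum (snd t) {..<n} \<le> k" if t: "t \<in> T" for t
  proof -
    have "sum (snd t) {..<n} \<le> sum (fst t) {..<n}" using hle[OF t] by (intro sum_mono) simp
    then show ?thesis using sumle[OF t] by linarith
  qed
  have sum_diff: "sum (\<lambda>i. fst t i - snd t i) {..<n} \<le> k" if t: "t \<in> T" for t
  proof -
    have "sum (\<lambda>i. fst t i - snd t i) {..<n} \<le> sum (fst t) {..<n}" by (intro sum_mono) simp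
    then show ?thesis using sumle[OF t] by linarith
  qed
  define A where "A = (\<lambda>t::(nat\<Rightarrow>nat)\<times>(nat\<Rightarrow>nat). c (fst t) * (\<Prod>i<n. real (fst t i choose snd t i)))"
  have expand: "p (\<lambda>i. u i + v i) = (\<Sum>t\<in>T. A t * (\<Prod>i<n. u i ^ snd t i)
      * (\<Prod>i<n. v i ^ (fst t i - snd t i)))" for u v
  proof -
    have "p (\<lambda>i. u i + v i) = (\<Sum>\<alpha>\<in>exps n k. c \<alpha> * (\<Prod>i<n. (u i + v i) ^ \<alpha> i))" unfolding c ..
    also have "\<dots> = (\<Sum>\<alpha>\<in>exps n k. \<Sum>h\<in>H \<alpha>. A (\<alpha>, h) * (\<Prod>i<n. u i ^ h i) * (\<Prod>i<n. v i ^ (\<alpha> i - h i)))"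
      unfolding A_def H_def prod_add_power_eq_sum_PiE by (simp add: sum_distrib_left mult.assoc)
    also have "\<dots> = (\<Sum>t\<in>T. A t * (\<Prod>i<n. u i ^ snd t i) * (\<Prod>i<n. v i ^ (fst t i - snd t i)))"
      unfolding T_def using finite_exps finH by (subst sum.Sigma) (auto simp: split_beta)
    finally show ?thesis .
  qed
  show ?thesis using finT sum_snd sum_diff expand by (rule that)
qed

lemma poly_funs_integral_shift:
  assumes p: "p \<in> poly_funs n k"
    and int: "\<And>\<gamma>. sum \<gamma> {..<n} \<le> k \<Longrightarrow> integrable M (\<lambda>\<eta>. \<Prod>i<n. g \<eta> i ^ \<gamma> i)"
  shows "(\<lambda>u. \<integral>\<eta>. p (\<lambda>i. u i + g \<eta> i) \<partial>M) \<in> poly_funs n k"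
proof -
  obtain T A where finT: "finite T" and sum_snd: "\<And>t. t \<in> T \<Longrightarrow> sum (snd t) {..<n} \<le> k"
    and sum_diff: "\<And>t. t \<in> T \<Longrightarrow> (\<Sum>i<n. fst t i - snd t i) \<le> k"
    and expand: "\<And>u v. p (\<lambda>i. u i + v i) =
      (\<Sum>t\<in>T. A t * (\<Prod>i<n. u i ^ snd t i) * (\<Prod>i<n. v i ^ (fst t i - snd t i)))"
    using poly_funs_shift_expansion[OF p] by blast
  have "(\<integral>\<eta>. p (\<lambda>i. u i + g \<eta> i) \<partial>M) =
      (\<Sum>t\<in>T. (A t * (\<integral>\<eta>. (\<Prod>i<n. g \<eta> i ^ (fst t i - snd t i)) \<partial>M)) * (\<Prod>i<n. u i ^ snd t i))" for u
  proof -
    have "(\<integral>\<eta>. p (\<lambda>i. u i + g \<eta> i) \<partial>M) =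
        (\<Sum>t\<in>T. \<integral>\<eta>. A t * (\<Prod>i<n. u i ^ snd t i) * (\<Prod>i<n. g \<eta> i ^ (fst t i - snd t i)) \<partial>M)"
      unfolding expand using int sum_diff
        by (intro Bochner_Integration.integral_sum integrable_mult_right) auto
    then show ?thesis by (simp add: mult_ac)
  qed
  then show ?thesis using poly_funs_lincomb[OF finT sum_snd] by simp
qed

lemma sample_mean_add:
  "(\<And>i. i < n \<Longrightarrow> z i = x i + y i) \<Longrightarrow> sample_mean n z = sample_mean n x + sample_mean n y"
  unfolding sample_mean_def by (simp add: sum.distrib add_divide_distrib)

definition poly_weight :: "nat \<Rightarrow> (nat \<Rightarrow> real) \<Rightarrow> real" where "poly_weight n x = (\<Prod>i<n. 1 + \<bar>x i\<bar>)"
definition residuals :: "nat \<Rightarrow> (nat \<Rightarrow> real) \<Rightarrow> nat \<Rightarrow> real" where "residuals n x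
    = (\<lambda>i. x i - sample_mean n x)"
definition residual_monomial :: "nat \<Rightarrow> (nat \<Rightarrow> nat) \<Rightarrow> (nat \<Rightarrow> real) \<Rightarrow> real" where
  "residual_monomial n \<alpha> x = (\<Prod>i<n. residuals n x i ^ \<alpha> i)"
definition poly_growth :: "nat \<Rightarrow> nat \<Rightarrow> ((nat \<Rightarrow> real) \<Rightarrow> real) set" where
  "poly_growth n k = {h. h \<in> borel_measurable (PiM {..<n} (\<lambda>_. borel))
      \<and> (\<exists>c. \<forall>x. \<bar>h x\<bar> \<le> c * poly_weight n x ^ k)}"

lemma poly_weight_ge_1: "poly_weight n x \<ge> 1" unfolding poly_weight_def by (intro prod_ge_1) auto

lemma one_plus_abs_le_poly_weight: "i < n \<Longrightarrow> 1 + \<bar>x i\<bar> \<le> poly_weight n x"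
  unfolding poly_weight_def using prod_mono2[of "{..<n}" "{i}" "\<lambda>i. 1 + \<bar>x i\<bar>"] by auto

lemma abs_sample_mean_le_poly_weight: "n \<ge> 1 \<Longrightarrow> \<bar>sample_mean n x\<bar> \<le> poly_weight n x"
proof -
  assume n: "n \<ge> 1"
  have "\<bar>\<Sum>i<n. x i\<bar> \<le> (\<Sum>i<n. \<bar>x i\<bar>)" by (rule sum_abs)
  also have "\<dots> \<le> (\<Sum>i<n. poly_weight n x)" using one_plus_abs_le_poly_weight[of _ n x]
    by (intro sum_mono) force
  also have "\<dots> = real n * poly_weight n x" by simp
  finally show ?thesis using n unfolding sample_mean_def
    by (simp add: divide_le_eq abs_div mult.commute)
qed

lemma abs_residuals_le_poly_weight: "n \<ge> 1 \<Longrightarrow> i < n \<Longrightarrow> \<bar>residuals n x i\<bar> \<le> 2 * poly_weight n x"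
  using one_plus_abs_le_poly_weight[of i n x] abs_sample_mean_le_poly_weight[of n x]
    unfolding residuals_def by linarith

lemma abs_residual_monomial_le:
  assumes n: "n \<ge> 1" and a: "sum \<alpha> {..<n} \<le> k"
  shows "\<bar>residual_monomial n \<alpha> x\<bar> \<le> 2 ^ k * poly_weight n x ^ k"
proof -
  have "\<bar>residual_monomial n \<alpha> x\<bar> = (\<Prod>i<n. \<bar>residuals n x i\<bar> ^ \<alpha> i)"
    by (simp add: residual_monomial_def abs_prod power_abs)
  also have "\<dots> \<le> (\<Prod>i<n. (2 * poly_weight n x) ^ \<alpha> i)"
  proof (rule prod_mono)
    fix i assume "i \<in> {..<n}"
    then show "0 \<le> \<bar>residuals n x i\<bar> ^ \<alpha> i \<and> \<bar>residuals n x i\<bar> ^ \<alpha> i \<le> (2 * poly_weight n x) ^ \<alpha> i"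
      using power_mono[OF abs_residuals_le_poly_weight[OF n, of i x], of "\<alpha> i"] by simp
  qed
  also have "\<dots> = (2 * poly_weight n x) ^ sum \<alpha> {..<n}" by (simp add: power_sum)
  also have "\<dots> \<le> (2 * poly_weight n x) ^ k" using a poly_weight_ge_1[of n x]
    by (intro power_increasing) auto
  finally show ?thesis by (simp add: power_mult_distrib)
qed

lemma measurable_sample_mean[measurable]:
  "sample_mean n \<in> borel_measurable (PiM {..<n} (\<lambda>_. borel))"
  unfolding sample_mean_def by measurable

lemma measurable_residuals[measurable]:
  "i < n \<Longrightarrow> (\<lambda>x. residuals n x i) \<in> borel_measurable (PiM {..<n} (\<lambda>_. borel))"
  unfolding residuals_def by measurable

lemma measurable_residual_monomial:
  "residual_monomial n \<alpha> \<in> borel_measurable (PiM {..<n} (\<lambda>_. borel))"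
  unfolding residual_monomial_def[abs_def]
    by (intro borel_measurable_prod borel_measurable_power measurable_residuals) auto

lemma poly_growthI:
  "h \<in> borel_measurable (PiM {..<n} (\<lambda>_. borel)) \<Longrightarrow> (\<And>x. \<bar>h x\<bar> \<le> c * poly_weight n x ^ k) \<Longrightarrow> h
      \<in> poly_growth n k"
  unfolding poly_growth_def by auto

lemma poly_growth_measurable: "h \<in> poly_growth n k \<Longrightarrow> h \<in> borel_measurable (PiM {..<n} (\<lambda>_. borel))"
  unfolding poly_growth_def by auto

lemma poly_weight_power_poly_growth: "(\<lambda>x. poly_weight n x ^ k) \<in> poly_growth n k"
proof (rule poly_growthI[where c = 1])
  show "(\<lambda>x. poly_weight n x ^ k) \<in> borel_measurable (PiM {..<n} (\<lambda>_. borel))"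
    unfolding poly_weight_def by measurable
qed (simp add: poly_weight_def prod_nonneg)

lemma poly_growth_residual_monomial:
  "n \<ge> 1 \<Longrightarrow> sum \<alpha> {..<n} \<le> k \<Longrightarrow> residual_monomial n \<alpha> \<in> poly_growth n k"
  by (intro poly_growthI[where c = "2 ^ k"] measurable_residual_monomial abs_residual_monomial_le)

lemma sample_mean_poly_growth: "n \<ge> 1 \<Longrightarrow> k \<ge> 1 \<Longrightarrow> sample_mean n \<in> poly_growth n k"
proof (intro poly_growthI[where c = 1] measurable_sample_mean)
  fix x assume "n \<ge> 1" "k \<ge> 1"
  then have "\<bar>sample_mean n x\<bar> \<le> poly_weight n x" using abs_sample_mean_le_poly_weight by blast
  also have "\<dots> \<le> poly_weight n x ^ k" using poly_weight_ge_1[of n x] \<open>k \<ge> 1\<close>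
    by (simp add: self_le_power)
  finally show "\<bar>sample_mean n x\<bar> \<le> 1 * poly_weight n x ^ k" by simp
qed

lemma poly_growth_lincomb:
  assumes "finite I" "\<And>i. i \<in> I \<Longrightarrow> \<phi> i \<in> poly_growth n k"
  shows "(\<lambda>x. \<Sum>i\<in>I. a i * \<phi> i x) \<in> poly_growth n k"
  using assms
proof (induction I rule: finite_induct)
  case empty then show ?case by (intro poly_growthI[where c = 0]) auto
next
  case (insert j I)
  obtain c1 where c1: "\<And>x. \<bar>(\<Sum>i\<in>I. a i * \<phi> i x)\<bar> \<le> c1 * poly_weight n x ^ k"
    and m1: "(\<lambda>x. \<Sum>i\<in>I. a i * \<phi> i x) \<in> borel_measurable (PiM {..<n} (\<lambda>_. borel))"
    using insert unfolding poly_growth_def by auto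
  have "\<phi> j \<in> poly_growth n k" using insert by auto
  then obtain c2 where c2: "\<And>x. \<bar>\<phi> j x\<bar> \<le> c2 * poly_weight n x ^ k" and m2: "\<phi> j
      \<in> borel_measurable (PiM {..<n} (\<lambda>_. borel))"
    unfolding poly_growth_def by auto
  show ?case
  proof (rule poly_growthI[where c = "\<bar>a j\<bar> * c2 + c1"])
    show "(\<lambda>x. \<Sum>i\<in>insert j I. a i * \<phi> i x) \<in> borel_measurable (PiM {..<n} (\<lambda>_. borel))"
      using insert m1 m2 by simp
    fix x
    have "\<bar>a j * \<phi> j x\<bar> \<le> \<bar>a j\<bar> * (c2 * poly_weight n x ^ k)" using c2[of x]
      by (simp add: abs_mult mult_left_mono)
    then show "\<bar>\<Sum>i\<in>insert j I. a i * \<phi> i x\<bar> \<le> (\<bar>a j\<bar> * c2 + c1) * poly_weight n x ^ k"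
      using insert c1[of x] by (simp add: algebra_simps)
  qed
qed

lemma poly_growth_diff:
  "f \<in> poly_growth n k \<Longrightarrow> g \<in> poly_growth n k \<Longrightarrow> (\<lambda>x. f x - g x) \<in> poly_growth n k"
  using poly_growth_lincomb[of "{0::nat, 1}" "\<lambda>i. if i = 0 then f else g" n k
      "\<lambda>i. if i = 0 then 1 else -1"]
  by simp

lemma poly_growth_add:
  "f \<in> poly_growth n k \<Longrightarrow> g \<in> poly_growth n k \<Longrightarrow> (\<lambda>x. f x + g x) \<in> poly_growth n k"
  using poly_growth_lincomb[of "{0::nat, 1}" "\<lambda>i. if i = 0 then f else g" n k "\<lambda>i. 1"] by simp

lemma poly_growth_scale: "f \<in> poly_growth n k \<Longrightarrow> (\<lambda>x. a * f x) \<in> poly_growth n k"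
  using poly_growth_lincomb[of "{0::nat}" "\<lambda>i. f" n k "\<lambda>i. a"] by simp

lemma poly_funs_residuals_poly_growth:
  "n \<ge> 1 \<Longrightarrow> p \<in> poly_funs n k \<Longrightarrow> (\<lambda>x. p (residuals n x)) \<in> poly_growth n k"
proof -
  assume n: "n \<ge> 1" and p: "p \<in> poly_funs n k"
  obtain c where c: "p = (\<lambda>x. \<Sum>\<alpha>\<in>exps n k. c \<alpha> * (\<Prod>i<n. x i ^ \<alpha> i))" using p
    unfolding poly_funs_def by blast
  have "(\<lambda>x. \<Sum>\<alpha>\<in>exps n k. c \<alpha> * residual_monomial n \<alpha> x) \<in> poly_growth n k"
    using finite_exps n
      by (intro poly_growth_lincomb poly_growth_residual_monomial) (auto simp: exps_def)
  then show ?thesis unfolding c residual_monomial_def .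
qed

lemma resid_polys_eq: "resid_polys n k = {(\<lambda>x. p (residuals n x)) | p. p \<in> poly_funs n k}"
  unfolding resid_polys_def residuals_def ..

lemma resid_polys_iff_lincomb:
  "p \<in> resid_polys n k \<longleftrightarrow> (\<exists>d. p = (\<lambda>x. \<Sum>\<alpha>\<in>exps n k. d \<alpha> * residual_monomial n \<alpha> x))"
proof
  assume "p \<in> resid_polys n k"
  then show "\<exists>d. p = (\<lambda>x. \<Sum>\<alpha>\<in>exps n k. d \<alpha> * residual_monomial n \<alpha> x)"
    unfolding resid_polys_eq poly_funs_def residual_monomial_def by auto
next
  assume "\<exists>d. p = (\<lambda>x. \<Sum>\<alpha>\<in>exps n k. d \<alpha> * residual_monomial n \<alpha> x)"
  then obtain d where d: "p = (\<lambda>x. \<Sum>\<alpha>\<in>exps n k. d \<alpha> * residual_monomial n \<alpha> x)" by blast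
  define q where "q = (\<lambda>y. \<Sum>\<alpha>\<in>exps n k. d \<alpha> * (\<Prod>i<n. y i ^ \<alpha> i :: real))"
  have "q \<in> poly_funs n k" unfolding poly_funs_def q_def by blast
  moreover have "p = (\<lambda>x. q (residuals n x))" unfolding d q_def residual_monomial_def ..
  ultimately show "p \<in> resid_polys n k" unfolding resid_polys_eq by blast
qed

lemma resid_polys_poly_growth: "n \<ge> 1 \<Longrightarrow> p \<in> resid_polys n k \<Longrightarrow> p \<in> poly_growth n k"
  unfolding resid_polys_eq using poly_funs_residuals_poly_growth by auto

lemma resid_polys_const: "(\<lambda>x. 1) \<in> resid_polys n k"
  unfolding resid_polys_eq using poly_funs_const[of 1 n k]
    by (intro CollectI exI[of _ "\<lambda>_. 1"]) simp

lemma resid_polys_diff: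
  assumes "p \<in> resid_polys n k" "q \<in> resid_polys n k"
  shows "(\<lambda>x. p x - q x) \<in> resid_polys n k"
proof -
  obtain p' q' where "p' \<in> poly_funs n k" "q' \<in> poly_funs n k"
    "p = (\<lambda>x. p' (residuals n x))" "q = (\<lambda>x. q' (residuals n x))"
    using assms unfolding resid_polys_eq by blast
  then show ?thesis unfolding resid_polys_eq
    by (auto intro!: exI[of _ "\<lambda>y. p' y - q' y"] poly_funs_diff)
qed

section \<open>The polynomial Pitman estimator of a single law\<close>

locale pitman_model =
  fixes G :: "real measure" and n k :: nat
  assumes sets_G: "sets G = sets borel"
    and n1: "n \<ge> 1" and k1: "k \<ge> 1"
    and integrable_poly_weight: "integrable (sample_law n G) (\<lambda>x. poly_weight n x ^ (2 * k))"
begin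

definition ip_law :: "((nat \<Rightarrow> real) \<Rightarrow> real) \<Rightarrow> ((nat \<Rightarrow> real) \<Rightarrow> real) \<Rightarrow> real" where
  "ip_law f g = (\<integral>x. f x * g x \<partial>sample_law n G)"

lemma measurable_sample_law:
  "h \<in> borel_measurable (PiM {..<n} (\<lambda>_. borel)) \<Longrightarrow> h \<in> borel_measurable (sample_law n G)"
  unfolding sample_law_def using sets_PiM_cong[OF refl sets_G] measurable_cong_sets by blast

lemma integrable_mult_poly_growth:
  assumes "f \<in> poly_growth n k" "g \<in> poly_growth n k"
  shows "integrable (sample_law n G) (\<lambda>x. f x * g x)"
proof -
  obtain cf cg where cf: "\<And>x. \<bar>f x\<bar> \<le> cf * poly_weight n x ^ k" and cg: "\<And>x. \<bar>g x\<bar> \<le> cg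
      * poly_weight n x ^ k"
    using assms unfolding poly_growth_def by blast
  show ?thesis
  proof (rule Bochner_Integration.integrable_bound)
    show "integrable (sample_law n G) (\<lambda>x. cf * cg * poly_weight n x ^ (2 * k))"
      using integrable_poly_weight by simp
    show "(\<lambda>x. f x * g x) \<in> borel_measurable (sample_law n G)"
      using assms unfolding poly_growth_def by (auto intro!: measurable_sample_law)
    show "AE x in sample_law n G. norm (f x * g x) \<le> norm (cf * cg * poly_weight n x ^ (2 * k))"
    proof (rule AE_I2)
      fix x
      have "\<bar>f x * g x\<bar> \<le> (cf * poly_weight n x ^ k) * (cg * poly_weight n x ^ k)"
        unfolding abs_mult using cf[of x] cg[of x]
          by (intro mult_mono) (auto intro: order_trans[OF abs_ge_zero])
      also have "\<dots> = cf * cg * poly_weight n x ^ (2 * k)" by (simp add: mult_2 power_add)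
      finally show "norm (f x * g x) \<le> norm (cf * cg * poly_weight n x ^ (2 * k))" by simp
    qed
  qed
qed

sublocale semi_inner_space "poly_growth n k" ip_law
proof
  fix f g h assume f: "f \<in> poly_growth n k" and g: "g \<in> poly_growth n k" and h: "h
      \<in> poly_growth n k"
  show "ip_law (\<lambda>x. f x + g x) h = ip_law f h + ip_law g h"
    unfolding ip_law_def
      using integrable_mult_poly_growth[OF f h] integrable_mult_poly_growth[OF g h]
    by (simp add: distrib_right)
  show "ip_law (\<lambda>x. f x - g x) h = ip_law f h - ip_law g h"
    unfolding ip_law_def
      using integrable_mult_poly_growth[OF f h] integrable_mult_poly_growth[OF g h]
    by (simp add: left_diff_distrib)
next
  fix f g assume "f \<in> poly_growth n k" "g \<in> poly_growth n k"
  then show "(\<lambda>x. f x - g x) \<in> poly_growth n k" "(\<lambda>x. f x + g x) \<in> poly_growth n k"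
    by (auto intro: poly_growth_diff poly_growth_add)
qed (auto simp: ip_law_def poly_growth_scale mult.commute mult.left_commute intro:
    poly_growthI[where c = 0])

lemma proj_mean_exists:
  "\<exists>q. q \<in> resid_polys n k \<and> (\<forall>p \<in> resid_polys n k.
     integral\<^sup>L (sample_law n G) (\<lambda>x. (sample_mean n x - q x) * p x) = 0)"
proof -
  have mean: "sample_mean n \<in> poly_growth n k" using n1 k1 by (rule sample_mean_poly_growth)
  have monomials: "residual_monomial n \<alpha> \<in> poly_growth n k" if "\<alpha> \<in> exps n k" for \<alpha>
    using that n1 by (intro poly_growth_residual_monomial) (auto simp: exps_def)
  obtain c where c: "\<forall>\<alpha>\<in>exps n k.
      ip_law (\<lambda>x. sample_mean n x - (\<Sum>\<beta>\<in>exps n k. c \<beta> * residual_monomial n \<beta> x))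
        (residual_monomial n \<alpha>) = 0"
    using orthogonal_residual_exists[of "exps n k" "residual_monomial n", OF finite_exps monomials mean]
    by blast
  define q where "q = (\<lambda>x. \<Sum>\<beta>\<in>exps n k. c \<beta> * residual_monomial n \<beta> x)"
  have q: "q \<in> resid_polys n k" unfolding q_def resid_polys_iff_lincomb by blast
  have r: "(\<lambda>x. sample_mean n x - q x) \<in> poly_growth n k"
    using mean resid_polys_poly_growth[OF n1 q] by (rule poly_growth_diff)
  have "ip_law (\<lambda>x. sample_mean n x - q x) p = 0" if p: "p \<in> resid_polys n k" for p
  proof -
    obtain d where "p = (\<lambda>x. \<Sum>\<alpha>\<in>exps n k. d \<alpha> * residual_monomial n \<alpha> x)"
      using p unfolding resid_polys_iff_lincomb by blast
    then show ?thesis using c unfolding q_def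
      by (simp only:) (intro ip_lincomb_right_eq_0 finite_exps monomials r[unfolded q_def]; simp)
  qed
  then show ?thesis using q unfolding ip_law_def by blast
qed

lemma proj_mean_resid_polys: "proj_mean k n G \<in> resid_polys n k"
  and proj_mean_orthogonal:
    "p \<in> resid_polys n k \<Longrightarrow> ip_law (\<lambda>x. sample_mean n x - proj_mean k n G x) p = 0"
  using someI_ex[OF proj_mean_exists] unfolding proj_mean_def ip_law_def by blast+

lemma pitman_est_poly_growth: "pitman_est k n G \<in> poly_growth n k"
  unfolding pitman_est_def
    using sample_mean_poly_growth[OF n1 k1] resid_polys_poly_growth[OF n1 proj_mean_resid_polys]
  by (rule poly_growth_diff)

lemma integral_pitman_est: "(\<integral>x. pitman_est k n G x \<partial>sample_law n G) = 0"
  using proj_mean_orthogonal[OF resid_polys_const] unfolding ip_law_def pitman_est_def by simp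

lemma pitman_var_eq_ip_law: "pitman_var k n G = ip_law (pitman_est k n G) (pitman_est k n G)"
  unfolding pitman_var_def ip_law_def using integral_pitman_est by (simp add: power2_eq_square)

text \<open>The equivariant polynomial estimators of degree k are exactly xbar - p(residuals).\<close>
lemma pitman_var_le_equivariant:
  assumes p: "p \<in> poly_funs n k"
  shows "pitman_var k n G \<le>
    ip_law (\<lambda>x. sample_mean n x - p (residuals n x)) (\<lambda>x. sample_mean n x - p (residuals n x))"
proof -
  let ?Q = "proj_mean k n G"
  have p': "(\<lambda>x. p (residuals n x)) \<in> resid_polys n k" using p unfolding resid_polys_eq by blast
  have mean: "sample_mean n \<in> poly_growth n k" using n1 k1 by (rule sample_mean_poly_growth)
  have "ip_law (\<lambda>x. sample_mean n x - ?Q x) (\<lambda>x. sample_mean n x - ?Q x)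
      \<le> ip_law (\<lambda>x. sample_mean n x - p (residuals n x)) (\<lambda>x. sample_mean n x - p (residuals n x))"
    by (intro orthogonal_residual_le mean resid_polys_poly_growth[OF n1] proj_mean_resid_polys p'
        proj_mean_orthogonal resid_polys_diff)
  then show ?thesis unfolding pitman_var_eq_ip_law pitman_est_def .
qed

end

section \<open>All convolutions on one product space\<close>

lemma one_plus_abs_sum_le_prod: "finite s \<Longrightarrow> 1 + \<bar>\<Sum>j\<in>s. a j\<bar> \<le> (\<Prod>j\<in>s. 1 + \<bar>a j :: real\<bar>)"
proof (induction s rule: finite_induct)
  case empty then show ?case by simp
next
  case (insert x s)
  have "1 + \<bar>\<Sum>j\<in>insert x s. a j\<bar> \<le> 1 + \<bar>a x\<bar> + \<bar>\<Sum>j\<in>s. a j\<bar>" using insert by simp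
  also have "\<dots> \<le> (1 + \<bar>a x\<bar>) * (1 + \<bar>\<Sum>j\<in>s. a j\<bar>)" by (simp add: algebra_simps)
  also have "\<dots> \<le> (1 + \<bar>a x\<bar>) * (\<Prod>j\<in>s. 1 + \<bar>a j\<bar>)" using insert by (intro mult_left_mono) auto
  finally show ?case using insert by simp
qed

lemma insort_append: "(\<And>y. y \<in> set xs \<Longrightarrow> y < x) \<Longrightarrow> insort x xs = xs @ [x]"
proof (induction xs)
  case Nil then show ?case by simp
next
  case (Cons a xs)
  then have "a < x" by auto
  then have nle: "\<not> x \<le> a" by (simp add: not_le)
  have IH: "insort x xs = xs @ [x]" using Cons by auto
  show ?case using nle IH by simp
qed

lemma conv_set_insert:
  assumes "finite s0" "\<And>y. y \<in> s0 \<Longrightarrow> y < a"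
  shows "conv_set F (insert a s0) = (F a \<star> conv_set F s0)"
proof -
  have "a \<notin> s0" using assms by auto
  then have "sorted_list_of_set (insert a s0) = sorted_list_of_set s0 @ [a]"
    using assms by (simp add: sorted_list_of_set_insert, intro insort_append) auto
  then show ?thesis unfolding conv_set_def by simp
qed

lemma conv_set_empty: "conv_set F {} = return borel 0"
  unfolding conv_set_def by simp

lemma one_plus_abs_power_le:
  fixes x :: real
  shows "(1 + \<bar>x\<bar>) ^ (2 * k) \<le> 4 ^ k * (1 + x ^ (2 * k))"
proof (cases "\<bar>x\<bar> \<le> 1")
  case True
  have "(1 + \<bar>x\<bar>) ^ (2 * k) \<le> 2 ^ (2 * k)" using True by (intro power_mono) auto
  also have "\<dots> = 4 ^ k" by (simp add: power_mult)
  also have "\<dots> \<le> 4 ^ k * (1 + x ^ (2 * k))" by (simp add: power_mult)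
  finally show ?thesis .
next
  case False
  have "(1 + \<bar>x\<bar>) ^ (2 * k) \<le> (2 * \<bar>x\<bar>) ^ (2 * k)" using False by (intro power_mono) auto
  also have "\<dots> = 4 ^ k * \<bar>x\<bar> ^ (2 * k)" by (simp add: power_mult_distrib power_mult)
  also have "\<bar>x\<bar> ^ (2 * k) = x ^ (2 * k)" by (simp add: power_even_abs)
  also have "4 ^ k * x ^ (2 * k) \<le> 4 ^ k * (1 + x ^ (2 * k))" by simp
  finally show ?thesis .
qed

locale sum_sample_model =
  fixes F :: "nat \<Rightarrow> real measure" and N n k :: nat
  assumes k1: "k \<ge> 1" and n1: "n \<ge> 1" and N1: "N \<ge> 1"
  and Fprob: "\<And>j. j \<in> {1..N} \<Longrightarrow> prob_space (F j)"
  and Fsets: "\<And>j. j \<in> {1..N} \<Longrightarrow> sets (F j) = sets borel"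
  and Fmom: "\<And>j. j \<in> {1..N} \<Longrightarrow> integrable (F j) (\<lambda>x. x ^ (2 * k))"
begin

definition "J = {1..N}"
definition "K = J \<times> {..<n}"
\<comment> \<open>Off J the value F 1 is a dummy, so that every index carries a probability law.\<close>
definition Fc :: "nat \<times> nat \<Rightarrow> real measure" where
  "Fc p = (if fst p \<in> J then F (fst p) else F 1)"
definition "\<Omega> = PiM K Fc"
definition weight :: "(nat \<times> nat \<Rightarrow> real) \<Rightarrow> real" where "weight \<omega> = (\<Prod>p\<in>K. 1 + \<bar>\<omega> p\<bar>)"
definition "block B = B \<times> {..<n}"
definition P :: "nat set \<Rightarrow> ((nat \<times> nat \<Rightarrow> real) \<Rightarrow> real) \<Rightarrow> (nat \<times> nat \<Rightarrow> real) \<Rightarrow> real" where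
  "P B f \<omega> = (\<integral>\<eta>. f (merge (K - block B) (block B) (\<omega>, \<eta>)) \<partial>PiM (block B) Fc)"
definition "Dom = {f. f \<in> borel_measurable \<Omega> \<and> (\<exists>c\<ge>0. \<forall>\<omega>\<in>space \<Omega>. \<bar>f \<omega>\<bar> \<le> c * weight \<omega> ^ k)}"
definition ip :: "((nat \<times> nat \<Rightarrow> real) \<Rightarrow> real) \<Rightarrow> ((nat \<times> nat \<Rightarrow> real) \<Rightarrow> real) \<Rightarrow> real" where
  "ip f g = (\<integral>\<omega>. f \<omega> * g \<omega> \<partial>\<Omega>)"

lemma finite_J: "finite J" and finite_K: "finite K" and finite_block: "finite B \<Longrightarrow> finite (block B)"
  unfolding J_def K_def block_def by auto

lemma one_in_J: "1 \<in> J" using N1 unfolding J_def by auto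

lemma prob_space_Fc: "prob_space (Fc p)"
  unfolding Fc_def using Fprob one_in_J unfolding J_def by auto

lemma sets_Fc: "sets (Fc p) = sets borel"
  unfolding Fc_def using Fsets one_in_J unfolding J_def by auto

lemma space_Fc: "space (Fc p) = UNIV"
  using sets_eq_imp_space_eq[OF sets_Fc] by simp

sublocale Fc_prod: product_prob_space Fc
  by (rule product_prob_spaceI) (rule prob_space_Fc)

lemma space_PiM_Fc: "space (PiM I Fc) = extensional I"
  by (auto simp: space_PiM PiE_def space_Fc)

lemma prob_space_PiM_Fc: "prob_space (PiM I Fc)"
  by (intro prob_space_PiM prob_space_Fc)

lemma prob_space_Omega: "prob_space \<Omega>"
  unfolding \<Omega>_def by (rule prob_space_PiM_Fc)

lemma block_subset_K: "B \<subseteq> J \<Longrightarrow> block B \<subseteq> K" unfolding block_def K_def by auto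

lemma measurable_Fc: "f \<in> borel_measurable borel \<Longrightarrow> f \<in> borel_measurable (Fc p)"
  using measurable_cong_sets[OF sets_Fc refl] by blast

lemma integrable_Fc_power: "d \<le> 2 * k \<Longrightarrow> integrable (Fc p) (\<lambda>x. (1 + \<bar>x\<bar>) ^ d)"
proof -
  assume d: "d \<le> 2 * k"
  define j where "j = (if fst p \<in> J then fst p else 1)"
  have j: "j \<in> {1..N}" "Fc p = F j" unfolding j_def Fc_def using one_in_J J_def by auto
  interpret prob_space "F j" using Fprob j by simp
  have "integrable (F j) (\<lambda>x. 4 ^ k * (1 + x ^ (2 * k)))"
    using Fmom[OF j(1)] by (intro integrable_mult_right integrable_add) auto
  moreover have "(\<lambda>x. (1 + \<bar>x\<bar>) ^ d) \<in> borel_measurable (F j)"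
    using measurable_Fc[of "\<lambda>x. (1 + \<bar>x\<bar>) ^ d" p] j by simp
  moreover have "AE x in F j. norm ((1 + \<bar>x\<bar>) ^ d) \<le> norm (4 ^ k * (1 + x ^ (2 * k)))"
  proof (rule AE_I2)
    fix x :: real
    have "(1 + \<bar>x\<bar>) ^ d \<le> (1 + \<bar>x\<bar>) ^ (2 * k)" using d by (intro power_increasing) auto
    also have "\<dots> \<le> 4 ^ k * (1 + x ^ (2 * k))" by (rule one_plus_abs_power_le)
    finally show "norm ((1 + \<bar>x\<bar>) ^ d) \<le> norm (4 ^ k * (1 + x ^ (2 * k)))" by simp
  qed
  ultimately have "integrable (F j) (\<lambda>x. (1 + \<bar>x\<bar>) ^ d)"
    by (rule Bochner_Integration.integrable_bound)
  then show ?thesis using j by simp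
qed

lemma integrable_prod_power:
  "finite I \<Longrightarrow> d \<le> 2 * k \<Longrightarrow> integrable (PiM I Fc) (\<lambda>\<eta>. \<Prod>p\<in>I. (1 + \<bar>\<eta> p\<bar>) ^ d)"
  by (intro Fc_prod.product_integrable_prod integrable_Fc_power) auto

lemma weight_ge_1: "weight \<omega> \<ge> 1" unfolding weight_def by (intro prod_ge_1) auto

lemma weight_power: "weight \<omega> ^ d = (\<Prod>p\<in>K. (1 + \<bar>\<omega> p\<bar>) ^ d)"
  unfolding weight_def by (simp add: prod_power_distrib)

lemma measurable_coord[measurable]: "p \<in> I \<Longrightarrow> (\<lambda>x. x p) \<in> borel_measurable (PiM I Fc)"
  using measurable_component_singleton[of p I Fc] measurable_cong_sets[OF refl sets_Fc] by blast

lemma integrable_weight_power: "d \<le> 2 * k \<Longrightarrow> integrable \<Omega> (\<lambda>\<omega>. weight \<omega> ^ d)"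
  unfolding weight_power \<Omega>_def using finite_K by (rule integrable_prod_power)

lemma integrable_mult_Dom: assumes "f \<in> Dom" "g \<in> Dom" shows "integrable \<Omega> (\<lambda>\<omega>. f \<omega> * g \<omega>)"
proof -
  obtain cf where cf: "cf \<ge> 0" "\<forall>\<omega>\<in>space \<Omega>. \<bar>f \<omega>\<bar> \<le> cf * weight \<omega> ^ k" using assms
    unfolding Dom_def by auto
  obtain cg where cg: "cg \<ge> 0" "\<forall>\<omega>\<in>space \<Omega>. \<bar>g \<omega>\<bar> \<le> cg * weight \<omega> ^ k" using assms
    unfolding Dom_def by auto
  have m: "f \<in> borel_measurable \<Omega>" "g \<in> borel_measurable \<Omega>" using assms unfolding Dom_def by auto
  show ?thesis
  proof (rule Bochner_Integration.integrable_bound[where f = "\<lambda>\<omega>. cf * cg * weight \<omega> ^ (2 * k)"])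
    show "integrable \<Omega> (\<lambda>\<omega>. cf * cg * weight \<omega> ^ (2 * k))"
      using integrable_weight_power[of "2 * k"] by simp
    show "(\<lambda>\<omega>. f \<omega> * g \<omega>) \<in> borel_measurable \<Omega>" using m by measurable
    show "AE \<omega> in \<Omega>. norm (f \<omega> * g \<omega>) \<le> norm (cf * cg * weight \<omega> ^ (2 * k))"
    proof (intro AE_I2)
      fix \<omega> assume \<omega>: "\<omega> \<in> space \<Omega>"
      have "\<bar>f \<omega> * g \<omega>\<bar> = \<bar>f \<omega>\<bar> * \<bar>g \<omega>\<bar>" by (simp add: abs_mult)
      also have "\<dots> \<le> (cf * weight \<omega> ^ k) * (cg * weight \<omega> ^ k)"
        using cf cg \<omega> by (intro mult_mono) auto
      also have "\<dots> = cf * cg * weight \<omega> ^ (2 * k)"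
        by (simp add: power_mult algebra_simps power2_eq_square)
      finally show "norm (f \<omega> * g \<omega>) \<le> norm (cf * cg * weight \<omega> ^ (2 * k))"
        using cf cg weight_ge_1[of \<omega>] by simp
    qed
  qed
qed

lemma DomI: "f \<in> borel_measurable \<Omega> \<Longrightarrow> (\<And>\<omega>. \<omega> \<in> space \<Omega> \<Longrightarrow> \<bar>f \<omega>\<bar> \<le> c * weight \<omega> ^ k) \<Longrightarrow> f \<in> Dom"
proof -
  assume m: "f \<in> borel_measurable \<Omega>" and b: "\<And>\<omega>. \<omega> \<in> space \<Omega> \<Longrightarrow> \<bar>f \<omega>\<bar> \<le> c * weight \<omega> ^ k"
  have "\<forall>\<omega>\<in>space \<Omega>. \<bar>f \<omega>\<bar> \<le> max c 0 * weight \<omega> ^ k"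
  proof
    fix \<omega> assume "\<omega> \<in> space \<Omega>"
    then have "\<bar>f \<omega>\<bar> \<le> c * weight \<omega> ^ k" by (rule b)
    also have "\<dots> \<le> max c 0 * weight \<omega> ^ k" using weight_ge_1[of \<omega>] by (intro mult_right_mono) auto
    finally show "\<bar>f \<omega>\<bar> \<le> max c 0 * weight \<omega> ^ k" .
  qed
  then show "f \<in> Dom" unfolding Dom_def using m by (intro CollectI conjI exI[of _ "max c 0"]) auto
qed

lemma Dom_lincomb:
  assumes f: "f \<in> Dom" and g: "g \<in> Dom"
  shows "(\<lambda>\<omega>. a * f \<omega> + b * g \<omega>) \<in> Dom"
proof -
  obtain cf cg where cf: "\<And>\<omega>. \<omega> \<in> space \<Omega> \<Longrightarrow> \<bar>f \<omega>\<bar> \<le> cf * weight \<omega> ^ k"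
    and cg: "\<And>\<omega>. \<omega> \<in> space \<Omega> \<Longrightarrow> \<bar>g \<omega>\<bar> \<le> cg * weight \<omega> ^ k"
    using f g unfolding Dom_def by blast
  show ?thesis
  proof (rule DomI[where c = "\<bar>a\<bar> * cf + \<bar>b\<bar> * cg"])
    show "(\<lambda>\<omega>. a * f \<omega> + b * g \<omega>) \<in> borel_measurable \<Omega>"
      using f g unfolding Dom_def by (auto intro!: borel_measurable_add borel_measurable_times)
    fix \<omega> assume \<omega>: "\<omega> \<in> space \<Omega>"
    have "\<bar>a * f \<omega> + b * g \<omega>\<bar> \<le> \<bar>a\<bar> * \<bar>f \<omega>\<bar> + \<bar>b\<bar> * \<bar>g \<omega>\<bar>"
      by (metis abs_mult abs_triangle_ineq)
    also have "\<dots> \<le> \<bar>a\<bar> * (cf * weight \<omega> ^ k) + \<bar>b\<bar> * (cg * weight \<omega> ^ k)"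
      using cf[OF \<omega>] cg[OF \<omega>] by (intro add_mono mult_left_mono) auto
    finally show "\<bar>a * f \<omega> + b * g \<omega>\<bar> \<le> (\<bar>a\<bar> * cf + \<bar>b\<bar> * cg) * weight \<omega> ^ k"
      by (simp add: algebra_simps)
  qed
qed

sublocale semi_inner_space Dom ip
proof
  fix f g assume f: "f \<in> Dom" and g: "g \<in> Dom"
  show "(\<lambda>x. f x - g x) \<in> Dom" using Dom_lincomb[OF f g, of 1 "-1"] by simp
  show "(\<lambda>x. f x + g x) \<in> Dom" using Dom_lincomb[OF f g, of 1 1] by simp
  show "ip f g = ip g f" unfolding ip_def by (simp add: mult.commute)
next
  fix f c assume f: "f \<in> Dom"
  show "(\<lambda>x. c * f x) \<in> Dom" using Dom_lincomb[OF f f, of c 0] by simp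
next
  show "(\<lambda>x. 0) \<in> Dom" by (rule DomI[where c = 0]) auto
next
  fix f g h assume f: "f \<in> Dom" and g: "g \<in> Dom" and h: "h \<in> Dom"
  show "ip (\<lambda>x. f x + g x) h = ip f h + ip g h"
    unfolding ip_def using integrable_mult_Dom[OF f h] integrable_mult_Dom[OF g h]
    by (simp add: distrib_right)
  show "ip (\<lambda>x. f x - g x) h = ip f h - ip g h"
    unfolding ip_def using integrable_mult_Dom[OF f h] integrable_mult_Dom[OF g h]
    by (simp add: left_diff_distrib)
next
  fix f h c
  show "ip (\<lambda>x. c * f x) h = c * ip f h" unfolding ip_def by (simp add: mult.assoc)
next
  fix f
  show "0 \<le> ip f f" unfolding ip_def by (intro Bochner_Integration.integral_nonneg) auto
qed

lemma K_split: "B \<subseteq> J \<Longrightarrow> (K - block B) \<union> block B = K" using block_subset_K by auto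

lemma space_Omega: "space \<Omega> = extensional K" unfolding \<Omega>_def by (rule space_PiM_Fc)

lemma merge_in_space_Omega: "B \<subseteq> J \<Longrightarrow> merge (K - block B) (block B) (\<omega>, \<eta>) \<in> space \<Omega>"
  unfolding space_Omega using extensional_merge[of "K - block B" "block B" \<omega> \<eta>] K_split by simp

lemma weight_merge_le:
  assumes B: "B \<subseteq> J"
  shows "weight (merge (K - block B) (block B) (\<omega>, \<eta>)) \<le> weight \<omega> * (\<Prod>p\<in>block B. 1 + \<bar>\<eta> p\<bar>)"
proof -
  have sub: "block B \<subseteq> K" using block_subset_K[OF B] .
  have "weight (merge (K - block B) (block B) (\<omega>, \<eta>)) =
      (\<Prod>p\<in>K - block B. 1 + \<bar>merge (K - block B) (block B) (\<omega>, \<eta>) p\<bar>)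
          * (\<Prod>p\<in>block B. 1 + \<bar>merge (K - block B) (block B) (\<omega>, \<eta>) p\<bar>)"
    unfolding weight_def by (rule prod.subset_diff[OF sub finite_K])
  also have "\<dots> = (\<Prod>p\<in>K - block B. 1 + \<bar>\<omega> p\<bar>) * (\<Prod>p\<in>block B. 1 + \<bar>\<eta> p\<bar>)"
    by (intro arg_cong2[where f = "(*)"] prod.cong) (auto simp: merge_def)
  also have "\<dots> \<le> weight \<omega> * (\<Prod>p\<in>block B. 1 + \<bar>\<eta> p\<bar>)"
    unfolding weight_def by (intro mult_right_mono prod_mono2 finite_K prod_nonneg) auto
  finally show ?thesis .
qed

lemma weight_merge_power_le:
  assumes B: "B \<subseteq> J"
  shows "weight (merge (K - block B) (block B) (\<omega>, \<eta>)) ^ k \<le> weight \<omega> ^ k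
      * (\<Prod>p\<in>block B. (1 + \<bar>\<eta> p\<bar>) ^ k)"
proof -
  have "weight (merge (K - block B) (block B) (\<omega>, \<eta>)) ^ k
      \<le> (weight \<omega> * (\<Prod>p\<in>block B. 1 + \<bar>\<eta> p\<bar>)) ^ k"
    using weight_merge_le[OF B] weight_ge_1
      by (intro power_mono) (auto intro: order_trans[OF zero_le_one])
  also have "\<dots> = weight \<omega> ^ k * (\<Prod>p\<in>block B. (1 + \<bar>\<eta> p\<bar>) ^ k)"
    by (simp add: power_mult_distrib prod_power_distrib)
  finally show ?thesis .
qed

lemma measurable_merge_slice:
  assumes B: "B \<subseteq> J"
  shows "(\<lambda>\<eta>. merge (K - block B) (block B) (\<omega>, \<eta>)) \<in> measurable (PiM (block B) Fc) \<Omega>"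
proof -
  have r: "restrict \<omega> (K - block B) \<in> space (PiM (K - block B) Fc)" unfolding space_PiM_Fc by simp
  have "(\<lambda>\<eta>. merge (K - block B) (block B) (restrict \<omega> (K - block B), \<eta>))
      \<in> measurable (PiM (block B) Fc) (PiM ((K - block B) \<union> block B) Fc)"
    by (rule measurable_Pair2[OF measurable_merge r])
  then show ?thesis unfolding \<Omega>_def K_split[OF B] by simp
qed

lemma measurable_merge_pair:
  assumes B: "B \<subseteq> J"
  shows "(\<lambda>(\<omega>, \<eta>). merge (K - block B) (block B) (\<omega>, \<eta>)) \<in> measurable (\<Omega> \<Otimes>\<^sub>M PiM (block B) Fc) \<Omega>"
proof -
  have m1: "(\<lambda>(\<omega>, \<eta>). (restrict \<omega> (K - block B), \<eta>)) \<in> measurable (\<Omega> \<Otimes>\<^sub>M PiM (block B) Fc)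
      (PiM (K - block B) Fc \<Otimes>\<^sub>M PiM (block B) Fc)"
    unfolding \<Omega>_def
      by (auto intro!: measurable_Pair
          measurable_comp[OF measurable_fst measurable_restrict_subset] simp: split_beta')
  have "(\<lambda>x. merge (K - block B) (block B) ((\<lambda>(\<omega>, \<eta>). (restrict \<omega> (K - block B), \<eta>)) x))
      \<in> measurable (\<Omega> \<Otimes>\<^sub>M PiM (block B) Fc) (PiM ((K - block B) \<union> block B) Fc)"
    using measurable_comp[OF m1 measurable_merge] by (simp add: comp_def)
  then show ?thesis unfolding \<Omega>_def K_split[OF B] by (simp add: split_beta')
qed

lemma Dom_bound: "f \<in> Dom \<Longrightarrow> \<exists>c\<ge>0. \<forall>\<omega>\<in>space \<Omega>. \<bar>f \<omega>\<bar> \<le> c * weight \<omega> ^ k" unfolding Dom_def by auto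
lemma Dom_measurable: "f \<in> Dom \<Longrightarrow> f \<in> borel_measurable \<Omega>" unfolding Dom_def by auto

lemma integrable_slice:
  assumes f: "f \<in> Dom" and B: "B \<subseteq> J"
  shows "integrable (PiM (block B) Fc) (\<lambda>\<eta>. f (merge (K - block B) (block B) (\<omega>, \<eta>)))"
proof -
  obtain c where c: "c \<ge> 0" "\<forall>\<omega>\<in>space \<Omega>. \<bar>f \<omega>\<bar> \<le> c * weight \<omega> ^ k" using Dom_bound[OF f] by auto
  have fin: "finite (block B)" using B finite_J by (intro finite_block) (auto dest: finite_subset)
  show ?thesis
  proof (rule Bochner_Integration.integrable_bound[where
      f = "\<lambda>\<eta>. c * weight \<omega> ^ k * (\<Prod>p\<in>block B. (1 + \<bar>\<eta> p\<bar>) ^ k)"])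
    show "integrable (PiM (block B) Fc) (\<lambda>\<eta>. c * weight \<omega> ^ k * (\<Prod>p\<in>block B. (1 + \<bar>\<eta> p\<bar>) ^ k))"
      using integrable_prod_power[OF fin, of k] by simp
    show "(\<lambda>\<eta>. f (merge (K - block B) (block B) (\<omega>, \<eta>))) \<in> borel_measurable (PiM (block B) Fc)"
      using measurable_comp[OF measurable_merge_slice[OF B] Dom_measurable[OF f]]
        by (simp add: comp_def)
    show "AE \<eta> in PiM (block B) Fc. norm (f (merge (K - block B) (block B) (\<omega>, \<eta>)))
        \<le> norm (c * weight \<omega> ^ k * (\<Prod>p\<in>block B. (1 + \<bar>\<eta> p\<bar>) ^ k))"
    proof (rule AE_I2)
      fix \<eta>
      have "\<bar>f (merge (K - block B) (block B) (\<omega>, \<eta>))\<bar> \<le> c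
          * weight (merge (K - block B) (block B) (\<omega>, \<eta>)) ^ k"
        using c merge_in_space_Omega[OF B] by blast
      also have "\<dots> \<le> c * (weight \<omega> ^ k * (\<Prod>p\<in>block B. (1 + \<bar>\<eta> p\<bar>) ^ k))"
        using c weight_merge_power_le[OF B] by (intro mult_left_mono) auto
      finally show "norm (f (merge (K - block B) (block B) (\<omega>, \<eta>)))
          \<le> norm (c * weight \<omega> ^ k * (\<Prod>p\<in>block B. (1 + \<bar>\<eta> p\<bar>) ^ k))"
        using c weight_ge_1[of \<omega>] by (simp add: mult.assoc prod_nonneg)
    qed
  qed
qed

lemma P_measurable:
  assumes f: "f \<in> Dom" and B: "B \<subseteq> J"
  shows "P B f \<in> borel_measurable \<Omega>"
proof -
  interpret PB: prob_space "PiM (block B) Fc" by (rule prob_space_PiM_Fc)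
  have "(\<lambda>x. f ((\<lambda>(\<omega>, \<eta>). merge (K - block B) (block B) (\<omega>, \<eta>)) x))
      \<in> borel_measurable (\<Omega> \<Otimes>\<^sub>M PiM (block B) Fc)"
    using measurable_comp[OF measurable_merge_pair[OF B] Dom_measurable[OF f]]
      by (simp add: comp_def)
  then have "case_prod (\<lambda>\<omega> \<eta>. f (merge (K - block B) (block B) (\<omega>, \<eta>)))
      \<in> borel_measurable (\<Omega> \<Otimes>\<^sub>M PiM (block B) Fc)"
    by (simp add: split_beta')
  then show ?thesis unfolding P_def by (rule PB.borel_measurable_lebesgue_integral)
qed

lemma P_Dom:
  assumes f: "f \<in> Dom" and B: "B \<subseteq> J"
  shows "P B f \<in> Dom"
proof -
  obtain c where c: "c \<ge> 0" "\<forall>\<omega>\<in>space \<Omega>. \<bar>f \<omega>\<bar> \<le> c * weight \<omega> ^ k" using Dom_bound[OF f] by auto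
  have fin: "finite (block B)" using B finite_J by (intro finite_block) (auto dest: finite_subset)
  define I where "I = (\<integral>\<eta>. (\<Prod>p\<in>block B. (1 + \<bar>\<eta> p\<bar>) ^ k) \<partial>PiM (block B) Fc)"
  show ?thesis
  proof (rule DomI[where c = "c * I"])
    show "P B f \<in> borel_measurable \<Omega>" by (rule P_measurable[OF f B])
    fix \<omega> assume "\<omega> \<in> space \<Omega>"
    have "\<bar>P B f \<omega>\<bar> \<le> (\<integral>\<eta>. \<bar>f (merge (K - block B) (block B) (\<omega>, \<eta>))\<bar> \<partial>PiM (block B) Fc)"
      unfolding P_def by (rule integral_abs_bound)
    also have "\<dots> \<le> (\<integral>\<eta>. c * weight \<omega> ^ k * (\<Prod>p\<in>block B. (1 + \<bar>\<eta> p\<bar>) ^ k) \<partial>PiM (block B) Fc)"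
    proof (rule integral_mono)
      show "integrable (PiM (block B) Fc) (\<lambda>\<eta>. \<bar>f (merge (K - block B) (block B) (\<omega>, \<eta>))\<bar>)"
        using integrable_slice[OF f B] by (rule integrable_abs)
      show "integrable (PiM (block B) Fc) (\<lambda>\<eta>. c * weight \<omega> ^ k * (\<Prod>p\<in>block B. (1 + \<bar>\<eta> p\<bar>) ^ k))"
        using integrable_prod_power[OF fin, of k] by simp
      fix \<eta>
      have "\<bar>f (merge (K - block B) (block B) (\<omega>, \<eta>))\<bar> \<le> c
          * weight (merge (K - block B) (block B) (\<omega>, \<eta>)) ^ k"
        using c merge_in_space_Omega[OF B] by blast
      also have "\<dots> \<le> c * (weight \<omega> ^ k * (\<Prod>p\<in>block B. (1 + \<bar>\<eta> p\<bar>) ^ k))"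
        using c weight_merge_power_le[OF B] by (intro mult_left_mono) auto
      finally show "\<bar>f (merge (K - block B) (block B) (\<omega>, \<eta>))\<bar> \<le> c * weight \<omega> ^ k
          * (\<Prod>p\<in>block B. (1 + \<bar>\<eta> p\<bar>) ^ k)"
        by (simp add: mult.assoc)
    qed
    also have "\<dots> = c * I * weight \<omega> ^ k" unfolding I_def by (simp add: algebra_simps)
    finally show "\<bar>P B f \<omega>\<bar> \<le> c * I * weight \<omega> ^ k" .
  qed
qed

lemma P_cong:
  assumes "\<And>p. p \<in> K - block B \<Longrightarrow> \<omega> p = \<omega>' p"
  shows "P B f \<omega> = P B f \<omega>'"
proof -
  have "merge (K - block B) (block B) (\<omega>, \<eta>) = merge (K - block B) (block B) (\<omega>', \<eta>)" for \<eta>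
    using assms by (auto simp: merge_def fun_eq_iff)
  then show ?thesis unfolding P_def by simp
qed

lemma P_merge: "P B f (merge (K - block B) (block B) (\<omega>, \<eta>)) = P B f \<omega>"
  by (rule P_cong) (auto simp: merge_def)

lemma P_idem:
  assumes B: "B \<subseteq> J"
  shows "P B (P B f) = P B f"
proof
  fix \<omega>
  interpret PB: prob_space "PiM (block B) Fc" by (rule prob_space_PiM_Fc)
  have "P B (P B f) \<omega> = (\<integral>\<eta>. P B f \<omega> \<partial>PiM (block B) Fc)"
    unfolding P_def[of B "P B f"] by (simp add: P_merge)
  also have "\<dots> = P B f \<omega>" by (simp add: PB.prob_space)
  finally show "P B (P B f) \<omega> = P B f \<omega>" .
qed

lemma ip_P_eq_integral:
  assumes f: "f \<in> Dom" and g: "g \<in> Dom" and B: "B \<subseteq> J"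
  shows "ip (P B f) g = (\<integral>x. P B f x * P B g x \<partial>PiM (K - block B) Fc)"
proof -
  have fin: "finite (block B)" using B finite_J by (intro finite_block) (auto dest: finite_subset)
  have int: "integrable (PiM ((K - block B) \<union> block B) Fc) (\<lambda>\<omega>. P B f \<omega> * g \<omega>)"
    using integrable_mult_Dom[OF P_Dom[OF f B] g] unfolding \<Omega>_def K_split[OF B] .
  have "ip (P B f) g = (\<integral>\<omega>. P B f \<omega> * g \<omega> \<partial>PiM ((K - block B) \<union> block B) Fc)"
    unfolding ip_def \<Omega>_def K_split[OF B] ..
  also have "\<dots> = (\<integral>x. (\<integral>y. P B f (merge (K - block B) (block B) (x, y))
      * g (merge (K - block B) (block B) (x, y)) \<partial>PiM (block B) Fc) \<partial>PiM (K - block B) Fc)"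
    using int
    by (intro Fc_prod.product_integral_fold) (auto intro: finite_subset[OF _ finite_K] fin)
  also have "\<dots> = (\<integral>x. P B f x * P B g x \<partial>PiM (K - block B) Fc)"
    unfolding P_merge by (simp add: P_def[of B g])
  finally show ?thesis .
qed

lemma P_sa:
  assumes f: "f \<in> Dom" and g: "g \<in> Dom" and B: "B \<subseteq> J"
  shows "ip (P B f) g = ip f (P B g)"
  using ip_P_eq_integral[OF f g B] ip_P_eq_integral[OF g f B] ip_sym[OF f P_Dom[OF g B]]
  by (simp add: mult.commute)

lemma block_union: "block (B \<union> B') = block B \<union> block B'" unfolding block_def by auto

lemma P_union:
  assumes f: "f \<in> Dom" and B: "B \<subseteq> J" and B': "B' \<subseteq> J" and d: "B \<inter> B' = {}"
  shows "P (B \<union> B') f = P B (P B' f)"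
proof
  fix \<omega>
  have BB: "B \<union> B' \<subseteq> J" using B B' by auto
  have fin: "finite (block B)" "finite (block B')" using B B' finite_J
    by (auto intro!: finite_block dest: finite_subset)
  have dK: "block B \<inter> block B' = {}" using d unfolding block_def by auto
  have int: "integrable (PiM (block B \<union> block B') Fc) (\<lambda>\<eta>. f
      (merge (K - block (B \<union> B')) (block (B \<union> B')) (\<omega>, \<eta>)))"
    using integrable_slice[OF f BB] unfolding block_union .
  have "P (B \<union> B') f \<omega> = (\<integral>\<eta>. f (merge (K - block (B \<union> B')) (block (B \<union> B')) (\<omega>, \<eta>)) \<partial>PiM
      (block B \<union> block B') Fc)"
    unfolding P_def block_union ..
  also have "\<dots> = (\<integral>x. (\<integral>y. f (merge (K - block (B \<union> B')) (block (B \<union> B'))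
      (\<omega>, merge (block B) (block B') (x, y))) \<partial>PiM (block B') Fc) \<partial>PiM (block B) Fc)"
    using int dK fin by (intro Fc_prod.product_integral_fold) auto
  also have "\<dots> = P B (P B' f) \<omega>"
    unfolding P_def[of B] P_def[of B']
  proof (intro Bochner_Integration.integral_cong refl arg_cong[where f = f])
    fix x y
    show "merge (K - block (B \<union> B')) (block (B \<union> B')) (\<omega>, merge (block B) (block B') (x, y)) =
          merge (K - block B') (block B') (merge (K - block B) (block B) (\<omega>, x), y)"
      using dK block_subset_K[OF B] block_subset_K[OF B'] unfolding block_union
        by (auto simp: merge_def fun_eq_iff)
  qed
  finally show "P (B \<union> B') f \<omega> = P B (P B' f) \<omega>" .
qed

lemma P_diff:
  assumes f: "f \<in> Dom" and g: "g \<in> Dom" and B: "B \<subseteq> J"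
  shows "P B (\<lambda>x. f x - g x) = (\<lambda>x. P B f x - P B g x)"
  unfolding P_def using integrable_slice[OF f B] integrable_slice[OF g B] by (simp add: fun_eq_iff)

lemma P_empty:
  assumes f: "f \<in> Dom"
  shows "ip (P {} f) f = ip f f"
proof -
  interpret PB: prob_space "PiM (block {}) Fc" by (rule prob_space_PiM_Fc)
  have "P {} f \<omega> = f \<omega>" if "\<omega> \<in> space \<Omega>" for \<omega>
  proof -
    have "merge (K - block {}) (block {}) (\<omega>, \<eta>) = \<omega>" for \<eta>
      using that unfolding space_Omega
        by (auto simp: merge_def block_def fun_eq_iff extensional_def)
    then show ?thesis unfolding P_def by (simp add: PB.prob_space)
  qed
  then show ?thesis unfolding ip_def by (intro Bochner_Integration.integral_cong) auto
qed

lemma P_J_eq_integral: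
  assumes f: "f \<in> Dom"
  shows "P J f \<omega> = (\<integral>\<omega>. f \<omega> \<partial>\<Omega>)"
proof -
  have KbJ: "block J = K" unfolding block_def K_def ..
  have "P J f \<omega> = (\<integral>\<eta>. f (merge {} K (\<omega>, \<eta>)) \<partial>\<Omega>)" unfolding P_def KbJ \<Omega>_def by simp
  also have "\<dots> = (\<integral>\<eta>. f \<eta> \<partial>\<Omega>)"
  proof (intro Bochner_Integration.integral_cong refl arg_cong[where f = f])
    fix \<eta> assume "\<eta> \<in> space \<Omega>"
    then show "merge {} K (\<omega>, \<eta>) = \<eta>" unfolding space_Omega
      by (auto simp: merge_def fun_eq_iff extensional_def)
  qed
  finally show ?thesis .
qed

sublocale projection_family Dom ip P J
proof
  fix B f assume "B \<subseteq> J" "f \<in> Dom" then show "P B f \<in> Dom" by (intro P_Dom)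
next
  fix f assume "f \<in> Dom" then show "ip (P {} f) f = ip f f" by (rule P_empty)
next
  fix B f assume "B \<subseteq> J" "f \<in> Dom" then show "P B (P B f) = P B f" by (intro P_idem)
next
  fix B f g assume "B \<subseteq> J" "f \<in> Dom" "g \<in> Dom" then show "ip (P B f) g = ip f (P B g)"
    by (intro P_sa)
next
  fix B B' f assume "B \<subseteq> J" "B' \<subseteq> J" "B \<inter> B' = {}" "f \<in> Dom"
  then show "P (B \<union> B') f = P B (P B' f)" by (intro P_union)
next
  fix B f g assume "B \<subseteq> J" "f \<in> Dom" "g \<in> Dom" then show "P B (\<lambda>x. f x - g x)
      = (\<lambda>x. P B f x - P B g x)" by (intro P_diff)
qed

definition sample :: "nat set \<Rightarrow> (nat \<times> nat \<Rightarrow> real) \<Rightarrow> (nat \<Rightarrow> real)" where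
  "sample s \<omega> = (\<lambda>i\<in>{..<n}. \<Sum>j\<in>s. \<omega> (j, i))"

lemma K_ne: "K \<noteq> {}"
proof -
  have "(1, 0) \<in> K" using one_in_J n1 unfolding K_def by auto
  then show ?thesis by auto
qed

lemma indep_coords: "prob_space.indep_vars \<Omega> Fc (\<lambda>p \<omega>. \<omega> p) K"
proof -
  interpret Om: prob_space \<Omega> by (rule prob_space_Omega)
  have rv: "\<And>p. p \<in> K \<Longrightarrow> (\<lambda>\<omega>. \<omega> p) \<in> measurable \<Omega> (Fc p)"
    unfolding \<Omega>_def by (rule measurable_component_singleton)
  have "distr \<Omega> (PiM K Fc) (\<lambda>x. \<lambda>p\<in>K. x p) = distr \<Omega> \<Omega> (\<lambda>x. x)"
    unfolding \<Omega>_def by (intro distr_cong) (auto simp: space_PiM_Fc extensional_restrict)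
  also have "\<dots> = \<Omega>" by (rule distr_id)
  also have "\<dots> = PiM K (\<lambda>p. distr \<Omega> (Fc p) (\<lambda>\<omega>. \<omega> p))"
    unfolding \<Omega>_def by (intro PiM_cong refl distr_PiM_component[symmetric] prob_space_Fc) auto
  finally show ?thesis using Om.indep_vars_iff_distr_eq_PiM'[OF K_ne rv] by simp
qed

lemma distr_coord: "p \<in> K \<Longrightarrow> distr \<Omega> borel (\<lambda>\<omega>. \<omega> p) = Fc p"
proof -
  assume p: "p \<in> K"
  have "distr \<Omega> borel (\<lambda>\<omega>. \<omega> p) = distr \<Omega> (Fc p) (\<lambda>\<omega>. \<omega> p)"
    by (intro distr_cong refl) (simp add: sets_Fc)
  also have "\<dots> = Fc p" unfolding \<Omega>_def using p by (intro distr_PiM_component prob_space_Fc)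
  finally show ?thesis .
qed

lemma measurable_column_sum[measurable]:
  "finite s \<Longrightarrow> (\<And>j. j \<in> s \<Longrightarrow> (j, i) \<in> I) \<Longrightarrow> (\<lambda>x. \<Sum>j\<in>s. x (j, i)) \<in> borel_measurable (PiM I Fc)"
  by (intro borel_measurable_sum) auto

lemma distr_column_sum:
  assumes i: "i < n" and s: "finite s" "s \<subseteq> J"
  shows "distr \<Omega> borel (\<lambda>\<omega>. \<Sum>j\<in>s. \<omega> (j, i)) = conv_set F s"
  using s
proof (induction s rule: finite_linorder_max_induct)
  case empty
  interpret prob_space \<Omega> by (rule prob_space_Omega)
  show ?case by (simp add: conv_set_empty distr_const)
next
  case (insert a s0)
  interpret prob_space \<Omega> by (rule prob_space_Omega)
  have a0: "a \<notin> s0" using insert.hyps(2) by auto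
  have s0J: "s0 \<subseteq> J" and aJ: "a \<in> J" using insert.prems by auto
  have aK: "(a, i) \<in> K" using aJ i by (simp add: K_def)
  have ind0: "indep_var (PiM {(a, i)} Fc) (\<lambda>\<omega>. restrict \<omega> {(a, i)}) (PiM (s0 \<times> {i}) Fc)
      (\<lambda>\<omega>. restrict \<omega> (s0 \<times> {i}))"
    by (rule indep_var_restrict[OF indep_coords]) (use a0 aK s0J i in \<open>auto simp: K_def\<close>)
  have m1: "(\<lambda>x. x (a, i)) \<in> measurable (PiM {(a, i)} Fc) borel" by measurable
  have m2: "(\<lambda>x. \<Sum>j\<in>s0. x (j, i)) \<in> measurable (PiM (s0 \<times> {i}) Fc) borel"
    using insert.hyps(1) by (intro measurable_column_sum) auto
  have ind: "indep_var borel (\<lambda>\<omega>. \<omega> (a, i)) borel (\<lambda>\<omega>. \<Sum>j\<in>s0. \<omega> (j, i))"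
    using indep_var_compose[OF ind0 m1 m2] by (simp add: comp_def)
  have "distr \<Omega> borel (\<lambda>\<omega>. \<Sum>j\<in>insert a s0. \<omega> (j, i)) = distr \<Omega> borel
      (\<lambda>\<omega>. \<omega> (a, i) + (\<Sum>j\<in>s0. \<omega> (j, i)))"
    using insert.hyps(1) a0 by simp
  also have "\<dots> = (distr \<Omega> borel (\<lambda>\<omega>. \<omega> (a, i)) \<star> distr \<Omega> borel (\<lambda>\<omega>. \<Sum>j\<in>s0. \<omega> (j, i)))"
  proof (rule sum_indep_random_variable[OF ind])
    show "(\<lambda>\<omega>. \<omega> (a, i)) \<in> borel_measurable \<Omega>" unfolding \<Omega>_def using aK by measurable
    show "(\<lambda>\<omega>. \<Sum>j\<in>s0. \<omega> (j, i)) \<in> borel_measurable \<Omega>" unfolding \<Omega>_def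
      using insert.hyps(1) s0J i by (intro measurable_column_sum) (auto simp: K_def)
  qed
  also have "\<dots> = (F a \<star> conv_set F s0)"
  proof -
    have "Fc (a, i) = F a" using aJ by (simp add: Fc_def)
    then show ?thesis unfolding insert.IH[OF s0J] distr_coord[OF aK] by simp
  qed
  also have "\<dots> = conv_set F (insert a s0)" using insert.hyps by (simp add: conv_set_insert)
  finally show ?case .
qed

lemma sample_measurable: "s \<subseteq> J \<Longrightarrow> sample s \<in> measurable \<Omega> (PiM {..<n} (\<lambda>_. borel))"
  unfolding sample_def \<Omega>_def
  by (intro measurable_restrict measurable_column_sum) (auto simp: K_def dest:
      finite_subset[OF _ finite_J])

lemma distr_sample:
  assumes s: "s \<subseteq> J"
  shows "distr \<Omega> (PiM {..<n} (\<lambda>_. borel)) (sample s) = sample_law n (conv_set F s)"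
proof -
  interpret Om: prob_space \<Omega> by (rule prob_space_Omega)
  have fin: "finite s" using s finite_J by (auto dest: finite_subset)
  have dfam: "disjoint_family_on (\<lambda>i. s \<times> {i}) {..<n}" by (auto simp: disjoint_family_on_def)
  have ind0: "Om.indep_vars (\<lambda>i. PiM (s \<times> {i}) Fc) (\<lambda>i \<omega>. restrict (\<lambda>p. \<omega> p) (s \<times> {i})) {..<n}"
    by (rule Om.indep_vars_restrict[OF indep_coords _ dfam]) (use s in \<open>auto simp: K_def\<close>)
  have ind1: "Om.indep_vars (\<lambda>_. borel)
      (\<lambda>i \<omega>. (\<lambda>x. \<Sum>j\<in>s. x (j, i)) (restrict (\<lambda>p. \<omega> p) (s \<times> {i}))) {..<n}"
    by (rule Om.indep_vars_compose2[OF ind0]) (use fin in \<open>auto intro: measurable_column_sum\<close>)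
  have ind: "Om.indep_vars (\<lambda>_. borel) (\<lambda>i \<omega>. \<Sum>j\<in>s. \<omega> (j, i)) {..<n}"
    using ind1 by (simp add: restrict_def)
  have rv: "\<And>i. i \<in> {..<n} \<Longrightarrow> (\<lambda>\<omega>. \<Sum>j\<in>s. \<omega> (j, i)) \<in> borel_measurable \<Omega>"
    unfolding \<Omega>_def using fin s by (intro measurable_column_sum) (auto simp: K_def)
  have "0 \<in> {..<n}" using n1 by auto
  then have ne: "{..<n} \<noteq> {}" by auto
  have "distr \<Omega> (PiM {..<n} (\<lambda>_. borel)) (sample s) = PiM {..<n}
      (\<lambda>i. distr \<Omega> borel (\<lambda>\<omega>. \<Sum>j\<in>s. \<omega> (j, i)))"
    using Om.indep_vars_iff_distr_eq_PiM'[OF ne rv] ind unfolding sample_def by simp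
  also have "\<dots> = PiM {..<n} (\<lambda>_. conv_set F s)"
    using distr_column_sum fin s by (intro PiM_cong) auto
  finally show ?thesis unfolding sample_law_def .
qed

lemma poly_weight_sample_le: "finite B \<Longrightarrow> poly_weight n (sample B \<omega>) \<le> (\<Prod>p\<in>block B. 1 + \<bar>\<omega> p\<bar>)"
proof -
  assume B: "finite B"
  have "poly_weight n (sample B \<omega>) = (\<Prod>i<n. 1 + \<bar>\<Sum>j\<in>B. \<omega> (j, i)\<bar>)"
    unfolding poly_weight_def sample_def by (intro prod.cong) auto
  also have "\<dots> \<le> (\<Prod>i<n. \<Prod>j\<in>B. 1 + \<bar>\<omega> (j, i)\<bar>)"
    using B by (intro prod_mono conjI one_plus_abs_sum_le_prod) auto
  also have "\<dots> = (\<Prod>j\<in>B. \<Prod>i<n. 1 + \<bar>\<omega> (j, i)\<bar>)" by (rule prod.swap)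
  also have "\<dots> = (\<Prod>p\<in>block B. 1 + \<bar>\<omega> p\<bar>)" unfolding block_def using B
    by (subst prod.Sigma) (auto simp: split_beta)
  finally show ?thesis .
qed

lemma prod_block_le_weight: "B \<subseteq> J \<Longrightarrow> (\<Prod>p\<in>block B. 1 + \<bar>\<omega> p\<bar>) \<le> weight \<omega>"
  unfolding weight_def using block_subset_K by (intro prod_mono2 finite_K) auto

lemma sample_measurable_PiM:
  assumes "finite B" "\<And>j i. j \<in> B \<Longrightarrow> i < n \<Longrightarrow> (j, i) \<in> I"
  shows "sample B \<in> measurable (PiM I Fc) (PiM {..<n} (\<lambda>_. borel))"
  unfolding sample_def using assms by (intro measurable_restrict measurable_column_sum) auto

lemma poly_growth_comp_sample:
  assumes h: "h \<in> poly_growth n k" and s: "s \<subseteq> J"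
  shows "(\<lambda>\<omega>. h (sample s \<omega>)) \<in> Dom"
proof -
  obtain c where c: "\<And>x. \<bar>h x\<bar> \<le> c * poly_weight n x ^ k" and m: "h
      \<in> borel_measurable (PiM {..<n} (\<lambda>_. borel))"
    using h unfolding poly_growth_def by auto
  have fin: "finite s" using s finite_J by (auto dest: finite_subset)
  show ?thesis
  proof (rule DomI[where c = "max c 0"])
    show "(\<lambda>\<omega>. h (sample s \<omega>)) \<in> borel_measurable \<Omega>"
      using measurable_comp[OF sample_measurable[OF s] m] by (simp add: comp_def)
    fix \<omega>
    have "poly_weight n (sample s \<omega>) \<le> weight \<omega>"
      using poly_weight_sample_le[OF fin, of \<omega>] prod_block_le_weight[OF s, of \<omega>] by linarith
    then have "poly_weight n (sample s \<omega>) ^ k \<le> weight \<omega> ^ k" using poly_weight_ge_1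
      by (intro power_mono) (auto intro: order_trans[OF zero_le_one])
    have "\<bar>h (sample s \<omega>)\<bar> \<le> c * poly_weight n (sample s \<omega>) ^ k" by (rule c)
    also have "\<dots> \<le> max c 0 * poly_weight n (sample s \<omega>) ^ k"
    proof -
      have "0 \<le> poly_weight n (sample s \<omega>)" using poly_weight_ge_1[of n "sample s \<omega>"] by linarith
      then show ?thesis by (intro mult_right_mono) auto
    qed
    also have "\<dots> \<le> max c 0 * weight \<omega> ^ k" using \<open>poly_weight n (sample s \<omega>) ^ k \<le> weight \<omega> ^ k\<close>
      by (intro mult_left_mono) auto
    finally show "\<bar>h (sample s \<omega>)\<bar> \<le> max c 0 * weight \<omega> ^ k" .
  qed
qed

lemma integral_sample_law:
  fixes h :: "(nat \<Rightarrow> real) \<Rightarrow> real"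
  assumes s: "s \<subseteq> J" and h: "h \<in> borel_measurable (PiM {..<n} (\<lambda>_. borel))"
  shows "(\<integral>x. h x \<partial>sample_law n (conv_set F s)) = (\<integral>\<omega>. h (sample s \<omega>) \<partial>\<Omega>)"
  unfolding distr_sample[OF s, symmetric] using sample_measurable[OF s] h by (rule integral_distr)

lemma pitman_model_conv_set:
  assumes s: "s \<subseteq> J"
  shows "pitman_model (conv_set F s) n k"
proof (rule pitman_model.intro)
  have fin: "finite s" using s finite_J by (auto dest: finite_subset)
  have law: "conv_set F s = distr \<Omega> borel (\<lambda>\<omega>. \<Sum>j\<in>s. \<omega> (j, 0))"
    using distr_column_sum[of 0 s] n1 fin s by simp
  show "sets (conv_set F s) = sets borel" unfolding law by simp
  have "(\<lambda>\<omega>. poly_weight n (sample s \<omega>) ^ k) \<in> Dom"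
    using poly_weight_power_poly_growth s by (rule poly_growth_comp_sample)
  then have "integrable \<Omega> (\<lambda>\<omega>. poly_weight n (sample s \<omega>) ^ k * poly_weight n (sample s \<omega>) ^ k)"
    using integrable_mult_Dom by blast
  then have "integrable \<Omega> (\<lambda>\<omega>. poly_weight n (sample s \<omega>) ^ (2 * k))"
    by (simp only: mult_2 power_add)
  then show "integrable (sample_law n (conv_set F s)) (\<lambda>x. poly_weight n x ^ (2 * k))"
    unfolding distr_sample[OF s, symmetric] using sample_measurable[OF s]
    by (subst integrable_distr_eq)
        (auto intro: poly_growth_measurable[OF poly_weight_power_poly_growth])
qed (use n1 k1 in auto)

lemma ip_sample_eq_ip_law:
  assumes s: "s \<subseteq> J" and f: "f \<in> poly_growth n k" and g: "g \<in> poly_growth n k"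
  shows "ip (\<lambda>\<omega>. f (sample s \<omega>)) (\<lambda>\<omega>. g (sample s \<omega>)) = pitman_model.ip_law (conv_set F s) n f g"
proof -
  have "(\<lambda>x. f x * g x) \<in> borel_measurable (PiM {..<n} (\<lambda>_. borel))"
    using poly_growth_measurable[OF f] poly_growth_measurable[OF g] by measurable
  then show ?thesis
    unfolding ip_def pitman_model.ip_law_def[OF pitman_model_conv_set[OF s]]
      by (simp add: integral_sample_law[OF s])
qed

definition tJ :: "(nat \<times> nat \<Rightarrow> real) \<Rightarrow> real" where
  "tJ \<omega> = pitman_est k n (conv_set F J) (sample J \<omega>)"

lemma tJ_Dom: "tJ \<in> Dom"
proof -
  interpret pitman_model "conv_set F J" n k by (rule pitman_model_conv_set) simp
  show ?thesis unfolding tJ_def[abs_def] using pitman_est_poly_growth order_refl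
    by (rule poly_growth_comp_sample)
qed

lemma ip_tJ: "ip tJ tJ = pitman_var k n (conv_set F J)"
proof -
  interpret pitman_model "conv_set F J" n k by (rule pitman_model_conv_set) simp
  show ?thesis unfolding tJ_def[abs_def] pitman_var_eq_ip_law
    using order_refl pitman_est_poly_growth pitman_est_poly_growth by (rule ip_sample_eq_ip_law)
qed

lemma integral_tJ: "(\<integral>\<omega>. tJ \<omega> \<partial>\<Omega>) = 0"
proof -
  interpret pitman_model "conv_set F J" n k by (rule pitman_model_conv_set) simp
  show ?thesis unfolding tJ_def using integral_sample_law[OF order_refl] integral_pitman_est
    poly_growth_measurable[OF pitman_est_poly_growth] by simp
qed

lemma ip_P_J_tJ: "ip (P J tJ) tJ = 0"
proof -
  have "P J tJ = (\<lambda>\<omega>. 0)" using P_J_eq_integral[OF tJ_Dom] integral_tJ by (simp add: fun_eq_iff)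
  then show ?thesis unfolding ip_def by simp
qed

lemma integrable_poly_growth_block:
  assumes h: "h \<in> poly_growth n k" and B: "B \<subseteq> J"
  shows "integrable (PiM (block B) Fc) (\<lambda>\<eta>. h (sample B \<eta>))"
proof -
  obtain c where c: "\<And>x. \<bar>h x\<bar> \<le> c * poly_weight n x ^ k" and m: "h
      \<in> borel_measurable (PiM {..<n} (\<lambda>_. borel))"
    using h unfolding poly_growth_def by auto
  have fin: "finite B" using B finite_J by (auto dest: finite_subset)
  have finKB: "finite (block B)" using fin by (rule finite_block)
  have mX: "sample B \<in> measurable (PiM (block B) Fc) (PiM {..<n} (\<lambda>_. borel))"
    using fin by (intro sample_measurable_PiM) (auto simp: block_def)
  show ?thesis
  proof (rule Bochner_Integration.integrable_bound[where
      f = "\<lambda>\<eta>. max c 0 * (\<Prod>p\<in>block B. (1 + \<bar>\<eta> p\<bar>) ^ k)"])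
    show "integrable (PiM (block B) Fc) (\<lambda>\<eta>. max c 0 * (\<Prod>p\<in>block B. (1 + \<bar>\<eta> p\<bar>) ^ k))"
      using integrable_prod_power[OF finKB, of k] by simp
    show "(\<lambda>\<eta>. h (sample B \<eta>)) \<in> borel_measurable (PiM (block B) Fc)"
      using measurable_comp[OF mX m] by (simp add: comp_def)
    show "AE \<eta> in PiM (block B) Fc. norm (h (sample B \<eta>))
        \<le> norm (max c 0 * (\<Prod>p\<in>block B. (1 + \<bar>\<eta> p\<bar>) ^ k))"
    proof (rule AE_I2)
      fix \<eta>
      have V0: "0 \<le> poly_weight n (sample B \<eta>)" using poly_weight_ge_1[of n "sample B \<eta>"]
        by linarith
      have "poly_weight n (sample B \<eta>) ^ k \<le> (\<Prod>p\<in>block B. 1 + \<bar>\<eta> p\<bar>) ^ k"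
        using poly_weight_sample_le[OF fin, of \<eta>] V0 by (intro power_mono) auto
      also have "\<dots> = (\<Prod>p\<in>block B. (1 + \<bar>\<eta> p\<bar>) ^ k)" by (simp add: prod_power_distrib)
      finally have Vle: "poly_weight n (sample B \<eta>) ^ k \<le> (\<Prod>p\<in>block B. (1 + \<bar>\<eta> p\<bar>) ^ k)" .
      have "\<bar>h (sample B \<eta>)\<bar> \<le> c * poly_weight n (sample B \<eta>) ^ k" by (rule c)
      also have "\<dots> \<le> max c 0 * poly_weight n (sample B \<eta>) ^ k" using V0
        by (intro mult_right_mono) auto
      also have "\<dots> \<le> max c 0 * (\<Prod>p\<in>block B. (1 + \<bar>\<eta> p\<bar>) ^ k)" using Vle
        by (intro mult_left_mono) auto
      finally show "norm (h (sample B \<eta>)) \<le> norm (max c 0 * (\<Prod>p\<in>block B. (1 + \<bar>\<eta> p\<bar>) ^ k))"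
        by (simp add: prod_nonneg)
    qed
  qed
qed

lemma sample_merge:
  assumes s: "s \<subseteq> J" and i: "i < n"
  shows "sample J (merge (K - block (J - s)) (block (J - s)) (\<omega>, \<eta>)) i = sample s \<omega> i
      + sample (J - s) \<eta> i"
proof -
  have fin: "finite s" "finite (J - s)" using s finite_J by (auto dest: finite_subset)
  have "sample J (merge (K - block (J - s)) (block (J - s)) (\<omega>, \<eta>)) i
      = (\<Sum>j\<in>s \<union> (J - s). merge (K - block (J - s)) (block (J - s)) (\<omega>, \<eta>) (j, i))"
    unfolding sample_def using i s by (simp add: Un_absorb1)
  also have "\<dots> = (\<Sum>j\<in>s. merge (K - block (J - s)) (block (J - s)) (\<omega>, \<eta>) (j, i))
      + (\<Sum>j\<in>J - s. merge (K - block (J - s)) (block (J - s)) (\<omega>, \<eta>) (j, i))"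
    using fin by (intro sum.union_disjoint) auto
  also have "(\<Sum>j\<in>s. merge (K - block (J - s)) (block (J - s)) (\<omega>, \<eta>) (j, i)) = (\<Sum>j\<in>s. \<omega> (j, i))"
    using s i by (intro sum.cong) (auto simp: merge_def K_def block_def)
  also have "(\<Sum>j\<in>J - s. merge (K - block (J - s)) (block (J - s)) (\<omega>, \<eta>) (j, i))
      = (\<Sum>j\<in>J - s. \<eta> (j, i))"
    using s i by (intro sum.cong) (auto simp: merge_def K_def block_def)
  finally show ?thesis unfolding sample_def using i by simp
qed

lemma tJ_merge:
  assumes s: "s \<subseteq> J" and q0: "q0 \<in> poly_funs n k" "proj_mean k n (conv_set F J)
      = (\<lambda>x. q0 (residuals n x))"
  shows "tJ (merge (K - block (J - s)) (block (J - s)) (\<omega>, \<eta>)) =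
    sample_mean n (sample s \<omega>) + sample_mean n (sample (J - s) \<eta>)
      - q0 (\<lambda>i. residuals n (sample s \<omega>) i + residuals n (sample (J - s) \<eta>) i)"
proof -
  let ?x = "sample J (merge (K - block (J - s)) (block (J - s)) (\<omega>, \<eta>))"
  have x: "\<And>i. i < n \<Longrightarrow> ?x i = sample s \<omega> i + sample (J - s) \<eta> i" using sample_merge[OF s] .
  have mean: "sample_mean n ?x = sample_mean n (sample s \<omega>) + sample_mean n (sample (J - s) \<eta>)"
    using x by (rule sample_mean_add)
  have "q0 (residuals n ?x) = q0 (\<lambda>i. residuals n (sample s \<omega>) i
      + residuals n (sample (J - s) \<eta>) i)"
    using q0(1) by (rule poly_funs_cong) (simp add: residuals_def x mean)
  then show ?thesis unfolding tJ_def pitman_est_def q0(2) mean by simp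
qed

lemma P_tJ_equivariant:
  assumes s: "s \<subseteq> J"
  shows "\<exists>p0\<in>poly_funs n k. \<forall>\<omega>. P (J - s) tJ \<omega> = sample_mean n (sample s \<omega>)
      - p0 (residuals n (sample s \<omega>))"
proof -
  define B where "B = J - s"
  have B: "B \<subseteq> J" unfolding B_def by auto
  interpret PB: prob_space "PiM (block B) Fc" by (rule prob_space_PiM_Fc)
  obtain q0 where q0: "q0 \<in> poly_funs n k" "proj_mean k n (conv_set F J) = (\<lambda>x. q0 (residuals n x))"
    using pitman_model.proj_mean_resid_polys[OF pitman_model_conv_set[OF order_refl]]
    unfolding resid_polys_eq by auto
  define g where "g = (\<lambda>\<eta> i. residuals n (sample B \<eta>) i)"
  have intm: "integrable (PiM (block B) Fc) (\<lambda>\<eta>. sample_mean n (sample B \<eta>))"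
    using sample_mean_poly_growth[OF n1 k1] B by (rule integrable_poly_growth_block)
  have intg: "integrable (PiM (block B) Fc) (\<lambda>\<eta>. \<Prod>i<n. g \<eta> i ^ \<gamma> i)" if "sum \<gamma> {..<n} \<le> k" for \<gamma>
    using integrable_poly_growth_block[OF poly_growth_residual_monomial[OF n1 that] B]
    unfolding g_def residual_monomial_def .
  define p0 where "p0 = (\<lambda>u. (\<integral>\<eta>. q0 (\<lambda>i. u i + g \<eta> i) \<partial>PiM (block B) Fc)
    - (\<integral>\<eta>. sample_mean n (sample B \<eta>) \<partial>PiM (block B) Fc))"
  have p0: "p0 \<in> poly_funs n k"
    unfolding p0_def
      by (intro poly_funs_diff poly_funs_integral_shift[OF q0(1) intg] poly_funs_const)
  have "P B tJ \<omega> = sample_mean n (sample s \<omega>) - p0 (residuals n (sample s \<omega>))" for \<omega>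
  proof -
    let ?m = "sample_mean n (sample s \<omega>)" and ?u = "residuals n (sample s \<omega>)"
    have merge: "tJ (merge (K - block B) (block B) (\<omega>, \<eta>)) =
        ?m + sample_mean n (sample B \<eta>) - q0 (\<lambda>i. ?u i + g \<eta> i)" for \<eta>
      unfolding B_def g_def using tJ_merge[OF s q0] .
    have "integrable (PiM (block B) Fc) (\<lambda>\<eta>. ?m + sample_mean n (sample B \<eta>)
        - tJ (merge (K - block B) (block B) (\<omega>, \<eta>)))"
      using intm integrable_slice[OF tJ_Dom B] by auto
    then have intq: "integrable (PiM (block B) Fc) (\<lambda>\<eta>. q0 (\<lambda>i. ?u i + g \<eta> i))"
      unfolding merge by simp
    have "P B tJ \<omega> = (\<integral>\<eta>. ?m + sample_mean n (sample B \<eta>)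
        - q0 (\<lambda>i. ?u i + g \<eta> i) \<partial>PiM (block B) Fc)"
      unfolding P_def merge ..
    also have "\<dots> = ?m - p0 ?u" unfolding p0_def using intm intq by (simp add: PB.prob_space)
    finally show ?thesis .
  qed
  then show ?thesis using p0 unfolding B_def by blast
qed

lemma pitman_var_le_ip_P_tJ:
  assumes s: "s \<subseteq> J"
  shows "pitman_var k n (conv_set F s) \<le> ip (P (J - s) tJ) (P (J - s) tJ)"
proof -
  obtain p0 where p0: "p0 \<in> poly_funs n k" "\<And>\<omega>. P (J - s) tJ \<omega> = sample_mean n (sample s \<omega>)
      - p0 (residuals n (sample s \<omega>))"
    using P_tJ_equivariant[OF s] by blast
  interpret pitman_model "conv_set F s" n k using s by (rule pitman_model_conv_set)
  have eq: "P (J - s) tJ = (\<lambda>\<omega>. sample_mean n (sample s \<omega>) - p0 (residuals n (sample s \<omega>)))"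
    using p0(2) by (simp add: fun_eq_iff)
  have est: "(\<lambda>x. sample_mean n x - p0 (residuals n x)) \<in> poly_growth n k"
    using sample_mean_poly_growth[OF n1 k1] poly_funs_residuals_poly_growth[OF n1 p0(1)]
      by (rule poly_growth_diff)
  show ?thesis
    using pitman_var_le_equivariant[OF p0(1)] ip_sample_eq_ip_law[OF s est est] unfolding eq by simp
qed

theorem sum_pitman_var_le:
  assumes m1: "1 \<le> m"
  shows "(\<Sum>s \<in> {s. s \<subseteq> {1..N} \<and> card s = m}. pitman_var k n (conv_set F s))
       \<le> real ((N - 1) choose (m - 1)) * pitman_var k n (conv_set F {1..N})"
proof -
  have cJ: "card J = N" unfolding J_def by simp
  have "(\<Sum>s \<in> {s. s \<subseteq> J \<and> card s = m}. pitman_var k n (conv_set F s))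
      \<le> (\<Sum>s \<in> {s. s \<subseteq> J \<and> card s = m}. ip (P (J - s) tJ) (P (J - s) tJ))"
    by (intro sum_mono pitman_var_le_ip_P_tJ) auto
  also have "\<dots> \<le> real ((card J - 1) choose (m - 1)) * ip tJ tJ"
    using finite_J tJ_Dom N1 m1 ip_P_J_tJ cJ by (intro sum_ip_P_complement_le) auto
  finally show ?thesis unfolding ip_tJ cJ unfolding J_def .
qed

end

theorem theorem1:
  fixes k N n m :: nat and F :: "nat \<Rightarrow> real measure"
  assumes "k \<ge> 1" and "n \<ge> 1" and "1 \<le> m" and "m \<le> N"
    and "\<And>j. j \<in> {1..N} \<Longrightarrow> prob_space (F j)"
    and "\<And>j. j \<in> {1..N} \<Longrightarrow> sets (F j) = sets borel"
    and "\<And>j. j \<in> {1..N} \<Longrightarrow> integrable (F j) (\<lambda>x. x ^ (2 * k))"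
  shows "pitman_var k n (conv_set F {1..N}) \<ge>
    (\<Sum>s \<in> {s. s \<subseteq> {1..N} \<and> card s = m}. pitman_var k n (conv_set F s))
      / real ((N - 1) choose (m - 1))"
proof -
  have N1: "N \<ge> 1" using assms(3,4) by linarith
  interpret sum_sample_model F N n k
    by (rule sum_sample_model.intro) (use assms N1 in auto)
  have pos: "real ((N - 1) choose (m - 1)) > 0"
    using assms(3,4) by (simp add: zero_less_binomial)
  have le: "(\<Sum>s \<in> {s. s \<subseteq> {1..N} \<and> card s = m}. pitman_var k n (conv_set F s))
       \<le> real ((N - 1) choose (m - 1)) * pitman_var k n (conv_set F {1..N})"
    by (rule sum_pitman_var_le[OF assms(3)])
  show ?thesis
    using le by (subst pos_divide_le_eq[OF pos]) (simp add: mult.commute)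
qed

end
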